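(* Let $R\in M_d\otimes M_d$ be a solution of the QYBE which is superizable with respect to a grading $p:\{1,\dots,d\}\to\{0,1\}$, and let $\underline R^a{}_c{}^b{}_d=(-1)^{p(a)p(b)}R^a{}_c{}^b{}_d$. Let $A(R)\rtimes\mathbb Z_2$ be the extension of the FRT bialgebra $A(R)$ by an element $g$ with $g^2=1$, $\Delta g=g\otimes g$ and $g\,t^i{}_j=(-1)^{p(i)+p(j)}t^i{}_j\,g$. Then $A(R)\rtimes\mathbb Z_2$ is an ordinary bialgebra, and its superization (with respect to $g$) is isomorphic, as a super-bialgebra, to $A(\underline R)\rtimes\mathbb Z_2$, the $\mathbb Z_2$-extension of the super FRT bialgebra associated to $\underline R$.
   Context: $R$ has entries $R^a{}_c{}^b{}_d$; it is superizable if $R^a{}_c{}^b{}_d=0$ whenever $p(a)+p(b)-p(c)-p(d)\not\equiv0\pmod2$. Repeated indices are summed. The FRT bialgebra $A(R)$ is generated by $1$ and $t^i{}_j$ ($1\le i,j\le d$) with relations $R^a{}_f{}^b{}_e\,t^f{}_c\,t^e{}_d=t^b{}_r\,t^a{}_s\,R^s{}_c{}^r{}_d$, coproduct $\Delta t^i{}_j=\sum_k t^i{}_k\otimes t^k{}_j$, counit $\varepsilon(t^i{}_j)=\delta^i_j$. The super FRT bialgebra $A(\underline R)$ is generated by $1$ and $u^i{}_j$ of degree $p(i)+p(j)$ with relations $(-1)^{p(a)p(b)+p(c)p(e)}\underline R^a{}_f{}^b{}_e\,u^f{}_c\,u^e{}_d=(-1)^{p(c)p(d)+p(r)p(a)}u^b{}_r\,u^a{}_s\,\underline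 R^s{}_c{}^r{}_d$, super-coproduct $\underline\Delta u^i{}_j=\sum_ku^i{}_k\otimes u^k{}_j$ (graded tensor product $(x\otimes y)(z\otimes w)=(-1)^{\deg y\deg z}xz\otimes yw$), counit $\delta^i_j$; its $\mathbb Z_2$-extension adjoins an even $g$ with $g^2=1$, $\underline\Delta g=g\otimes g$, $g\,u^i{}_j=(-1)^{p(i)+p(j)}u^i{}_j\,g$. Superization of a bialgebra $H$ with group-like $g$, $g^2=1$: grade by $ghg^{-1}=(-1)^{\deg h}h$, keep the algebra and counit, and replace the coproduct by $\underline\Delta h=\sum h_{(1)}g^{-\deg h_{(2)}}\otimes h_{(2)}$. *)

theory Defs
  imports Main "HOL-Library.Poly_Mapping"
begin

text \<open>Generators of A(R) semidirect Z2: t^i_j (written T i j) and g (written G).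
  For the super FRT bialgebra the generators u^i_j are also written T i j.\<close>
datatype gen = T nat nat | G

text \<open>Free (noncommutative, unital, associative) algebra over the field 'k on gen:
  finitely supported functions on words.\<close>
type_synonym 'k fa = "gen list \<Rightarrow>\<^sub>0 'k"

text \<open>Tensor square of the free algebra: basis = pairs of words.\<close>
type_synonym 'k fa2 = "(gen list \<times> gen list) \<Rightarrow>\<^sub>0 'k"

definition scal :: "'k::field \<Rightarrow> ('a \<Rightarrow>\<^sub>0 'k) \<Rightarrow> ('a \<Rightarrow>\<^sub>0 'k)" where
  "scal c x = Poly_Mapping.map (\<lambda>y. c * y) x"

definition word :: "gen list \<Rightarrow> 'k::field fa" where
  "word w = Poly_Mapping.single w 1"

definition gn :: "gen \<Rightarrow> 'k::field fa" where
  "gn x = word [x]"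

definition fone :: "'k::field fa" where
  "fone = word []"

definition fmul :: "'k::field fa \<Rightarrow> 'k fa \<Rightarrow> 'k fa" where
  "fmul x y = (\<Sum>(u,v)\<in>Poly_Mapping.keys x \<times> Poly_Mapping.keys y.
      Poly_Mapping.single (u @ v) (Poly_Mapping.lookup x u * Poly_Mapping.lookup y v))"

definition tens :: "'k::field fa \<Rightarrow> 'k fa \<Rightarrow> 'k fa2" where
  "tens x y = (\<Sum>(u,v)\<in>Poly_Mapping.keys x \<times> Poly_Mapping.keys y.
      Poly_Mapping.single (u, v) (Poly_Mapping.lookup x u * Poly_Mapping.lookup y v))"

text \<open>The grading p takes values in {0,1}; degrees are taken mod 2.\<close>
fun deg_gen :: "(nat \<Rightarrow> nat) \<Rightarrow> gen \<Rightarrow> nat" where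
  "deg_gen p (T i j) = (p i + p j) mod 2"
| "deg_gen p G = 0"

definition deg_word :: "(nat \<Rightarrow> nat) \<Rightarrow> gen list \<Rightarrow> nat" where
  "deg_word p w = (\<Sum>x\<leftarrow>w. deg_gen p x) mod 2"

definition homogeneous :: "(nat \<Rightarrow> nat) \<Rightarrow> nat \<Rightarrow> 'k::field fa \<Rightarrow> bool" where
  "homogeneous p e x \<longleftrightarrow> (\<forall>w\<in>Poly_Mapping.keys x. deg_word p w = e)"

definition sgn :: "nat \<Rightarrow> 'k::field" where
  "sgn m = (-1) ^ m"

definition tmul :: "'k::field fa2 \<Rightarrow> 'k fa2 \<Rightarrow> 'k fa2" where
  "tmul x y = (\<Sum>((u,v),(u',v'))\<in>Poly_Mapping.keys x \<times> Poly_Mapping.keys y.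
      Poly_Mapping.single (u @ u', v @ v') (Poly_Mapping.lookup x (u,v) * Poly_Mapping.lookup y (u',v')))"

definition stmul :: "(nat \<Rightarrow> nat) \<Rightarrow> 'k::field fa2 \<Rightarrow> 'k fa2 \<Rightarrow> 'k fa2" where
  "stmul p x y = (\<Sum>((u,v),(u',v'))\<in>Poly_Mapping.keys x \<times> Poly_Mapping.keys y.
      Poly_Mapping.single (u @ u', v @ v')
        (sgn (deg_word p v * deg_word p u') * Poly_Mapping.lookup x (u,v) * Poly_Mapping.lookup y (u',v')))"

definition word_eval :: "('b \<Rightarrow> 'b \<Rightarrow> 'b) \<Rightarrow> 'b \<Rightarrow> (gen \<Rightarrow> 'b) \<Rightarrow> gen list \<Rightarrow> 'b" where
  "word_eval mul one h w = foldr (\<lambda>x acc. mul (h x) acc) w one"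

definition alg_ext :: "(gen \<Rightarrow> 'k::field fa) \<Rightarrow> 'k fa \<Rightarrow> 'k fa" where
  "alg_ext h x = (\<Sum>w\<in>Poly_Mapping.keys x. scal (Poly_Mapping.lookup x w) (word_eval fmul fone h w))"

definition alg_ext_k :: "(gen \<Rightarrow> 'k::field) \<Rightarrow> 'k fa \<Rightarrow> 'k" where
  "alg_ext_k h x = (\<Sum>w\<in>Poly_Mapping.keys x. Poly_Mapping.lookup x w * word_eval (*) 1 h w)"

definition alg_ext2 :: "('k::field fa2 \<Rightarrow> 'k fa2 \<Rightarrow> 'k fa2) \<Rightarrow> (gen \<Rightarrow> 'k fa2) \<Rightarrow> 'k fa \<Rightarrow> 'k fa2" where
  "alg_ext2 mul h x = (\<Sum>w\<in>Poly_Mapping.keys x. scal (Poly_Mapping.lookup x w)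
       (word_eval mul (Poly_Mapping.single ([],[]) 1) h w))"

definition tens_map :: "('k::field fa \<Rightarrow> 'k fa) \<Rightarrow> 'k fa2 \<Rightarrow> 'k fa2" where
  "tens_map f x = (\<Sum>(u,v)\<in>Poly_Mapping.keys x. scal (Poly_Mapping.lookup x (u,v)) (tens (f (word u)) (f (word v))))"

inductive_set ideal_gen :: "'k::field fa set \<Rightarrow> 'k fa set" for S where
  zero: "0 \<in> ideal_gen S"
| gen: "r \<in> S \<Longrightarrow> fmul (fmul a r) b \<in> ideal_gen S"
| add: "x \<in> ideal_gen S \<Longrightarrow> y \<in> ideal_gen S \<Longrightarrow> x + y \<in> ideal_gen S"

inductive_set tens_ideal :: "'k::field fa set \<Rightarrow> 'k fa2 set" for I where
  zero: "0 \<in> tens_ideal I"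
| left: "x \<in> I \<Longrightarrow> tens x b \<in> tens_ideal I"
| right: "x \<in> I \<Longrightarrow> tens a x \<in> tens_ideal I"
| add: "x \<in> tens_ideal I \<Longrightarrow> y \<in> tens_ideal I \<Longrightarrow> x + y \<in> tens_ideal I"

text \<open>R a c b d stands for R^a_c^b_d; indices range over {1..n}.\<close>
definition QYBE :: "nat \<Rightarrow> (nat \<Rightarrow> nat \<Rightarrow> nat \<Rightarrow> nat \<Rightarrow> 'k::field) \<Rightarrow> bool" where
  "QYBE n R \<longleftrightarrow> (\<forall>a\<in>{1..n}. \<forall>b\<in>{1..n}. \<forall>c\<in>{1..n}. \<forall>a'\<in>{1..n}. \<forall>b'\<in>{1..n}. \<forall>c'\<in>{1..n}.
     (\<Sum>x\<in>{1..n}. \<Sum>y\<in>{1..n}. \<Sum>z\<in>{1..n}. R a x b y * R x a' c z * R y b' z c')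
   = (\<Sum>x\<in>{1..n}. \<Sum>y\<in>{1..n}. \<Sum>z\<in>{1..n}. R b y c z * R a x z c' * R x a' y b'))"

definition superizable :: "nat \<Rightarrow> (nat \<Rightarrow> nat) \<Rightarrow> (nat \<Rightarrow> nat \<Rightarrow> nat \<Rightarrow> nat \<Rightarrow> 'k::field) \<Rightarrow> bool" where
  "superizable n p R \<longleftrightarrow> (\<forall>a\<in>{1..n}. \<forall>b\<in>{1..n}. \<forall>c\<in>{1..n}. \<forall>d\<in>{1..n}.
     odd (p a + p b + p c + p d) \<longrightarrow> R a c b d = 0)"

definition Rsuper :: "(nat \<Rightarrow> nat) \<Rightarrow> (nat \<Rightarrow> nat \<Rightarrow> nat \<Rightarrow> nat \<Rightarrow> 'k::field)
    \<Rightarrow> nat \<Rightarrow> nat \<Rightarrow> nat \<Rightarrow> nat \<Rightarrow> 'k" where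
  "Rsuper p R a c b d = sgn (p a * p b) * R a c b d"

definition FRT_rel :: "nat \<Rightarrow> (nat \<Rightarrow> nat \<Rightarrow> nat \<Rightarrow> nat \<Rightarrow> 'k::field) \<Rightarrow> nat \<Rightarrow> nat \<Rightarrow> nat \<Rightarrow> nat \<Rightarrow> 'k fa" where
  "FRT_rel n R a b c d =
     (\<Sum>f\<in>{1..n}. \<Sum>e\<in>{1..n}. scal (R a f b e) (fmul (gn (T f c)) (gn (T e d))))
   - (\<Sum>r\<in>{1..n}. \<Sum>s\<in>{1..n}. scal (R s c r d) (fmul (gn (T b r)) (gn (T a s))))"

text \<open>Generators T i j with indices outside {1..n} are not generators of the algebra:
  they are set to zero (and have zero coproduct and counit).\<close>
definition Z2_rels :: "nat \<Rightarrow> (nat \<Rightarrow> nat) \<Rightarrow> 'k::field fa set" where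
  "Z2_rels n p = {fmul (gn G) (gn G) - fone} \<union>
     {gn (T i j) | i j. \<not> (i \<in> {1..n} \<and> j \<in> {1..n})} \<union>
     {fmul (gn G) (gn (T i j)) - scal (sgn (p i + p j)) (fmul (gn (T i j)) (gn G)) | i j.
        i \<in> {1..n} \<and> j \<in> {1..n}}"

definition AR_Z2_rels :: "nat \<Rightarrow> (nat \<Rightarrow> nat) \<Rightarrow> (nat \<Rightarrow> nat \<Rightarrow> nat \<Rightarrow> nat \<Rightarrow> 'k::field) \<Rightarrow> 'k fa set" where
  "AR_Z2_rels n p R = {FRT_rel n R a b c d | a b c d.
       a \<in> {1..n} \<and> b \<in> {1..n} \<and> c \<in> {1..n} \<and> d \<in> {1..n}} \<union> Z2_rels n p"

text \<open>Coproduct and counit on generators (same formulas for A(R) and A(R-underline)).\<close>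
definition cop_gen :: "nat \<Rightarrow> gen \<Rightarrow> 'k::field fa2" where
  "cop_gen n x = (case x of
      T i j \<Rightarrow> (if i \<in> {1..n} \<and> j \<in> {1..n}
                 then (\<Sum>k\<in>{1..n}. tens (gn (T i k)) (gn (T k j))) else 0)
    | G \<Rightarrow> tens (gn G) (gn G))"

definition counit_gen :: "nat \<Rightarrow> gen \<Rightarrow> 'k::field" where
  "counit_gen n x = (case x of T i j \<Rightarrow> (if i = j \<and> i \<in> {1..n} then 1 else 0) | G \<Rightarrow> 1)"

definition cop :: "nat \<Rightarrow> 'k::field fa \<Rightarrow> 'k fa2" where
  "cop n = alg_ext2 tmul (cop_gen n)"

definition counit :: "nat \<Rightarrow> 'k::field fa \<Rightarrow> 'k" where
  "counit n = alg_ext_k (counit_gen n)"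

text \<open>Superization: replace h_(1) \<otimes> h_(2) by h_(1) g^(-deg h_(2)) \<otimes> h_(2) (g^(-1) = g).\<close>
definition superize_map :: "(nat \<Rightarrow> nat) \<Rightarrow> 'k::field fa2 \<Rightarrow> 'k fa2" where
  "superize_map p x = (\<Sum>(u,v)\<in>Poly_Mapping.keys x.
      Poly_Mapping.single (u @ replicate (deg_word p v) G, v) (Poly_Mapping.lookup x (u,v)))"

definition cop_superized :: "nat \<Rightarrow> (nat \<Rightarrow> nat) \<Rightarrow> 'k::field fa \<Rightarrow> 'k fa2" where
  "cop_superized n p x = superize_map p (cop n x)"

definition superFRT_rel :: "nat \<Rightarrow> (nat \<Rightarrow> nat) \<Rightarrow> (nat \<Rightarrow> nat \<Rightarrow> nat \<Rightarrow> nat \<Rightarrow> 'k::field)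
    \<Rightarrow> nat \<Rightarrow> nat \<Rightarrow> nat \<Rightarrow> nat \<Rightarrow> 'k fa" where
  "superFRT_rel n p Ru a b c d =
     (\<Sum>f\<in>{1..n}. \<Sum>e\<in>{1..n}. scal (sgn (p a * p b + p c * p e) * Ru a f b e)
          (fmul (gn (T f c)) (gn (T e d))))
   - (\<Sum>r\<in>{1..n}. \<Sum>s\<in>{1..n}. scal (sgn (p c * p d + p r * p a) * Ru s c r d)
          (fmul (gn (T b r)) (gn (T a s))))"

definition superAR_Z2_rels :: "nat \<Rightarrow> (nat \<Rightarrow> nat) \<Rightarrow> (nat \<Rightarrow> nat \<Rightarrow> nat \<Rightarrow> nat \<Rightarrow> 'k::field) \<Rightarrow> 'k fa set" where
  "superAR_Z2_rels n p Ru = {superFRT_rel n p Ru a b c d | a b c d.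
       a \<in> {1..n} \<and> b \<in> {1..n} \<and> c \<in> {1..n} \<and> d \<in> {1..n}} \<union> Z2_rels n p"

definition scop :: "nat \<Rightarrow> (nat \<Rightarrow> nat) \<Rightarrow> 'k::field fa \<Rightarrow> 'k fa2" where
  "scop n p = alg_ext2 (stmul p) (cop_gen n)"

text \<open>F/I is an (ordinary) bialgebra with the coproduct and counit induced from the
  generator data: I is a bialgebra ideal (coproduct and counit descend).\<close>
definition is_bialgebra_presented :: "nat \<Rightarrow> 'k::field fa set \<Rightarrow> bool" where
  "is_bialgebra_presented n I \<longleftrightarrow>
     (\<forall>x\<in>I. cop n x \<in> tens_ideal I \<and> counit n x = 0)"

definition is_super_bialgebra_presented :: "nat \<Rightarrow> (nat \<Rightarrow> nat) \<Rightarrow> 'k::field fa set \<Rightarrow> bool" where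
  "is_super_bialgebra_presented n p J \<longleftrightarrow>
     (\<forall>x\<in>J. scop n p x \<in> tens_ideal J \<and> counit n x = 0)"

text \<open>Isomorphism of super-bialgebras from the superization of F/I (coproduct
  cop_superized) to F/J (coproduct scop): an algebra map given on generators by phi0
  (every algebra map F/I \<rightarrow> F/J lifts to such), well defined, bijective (inverse
  given on generators by psi0), degree preserving, and compatible with coproducts
  and counits.\<close>
definition super_bialg_iso :: "nat \<Rightarrow> (nat \<Rightarrow> nat) \<Rightarrow> 'k::field fa set \<Rightarrow> 'k fa set
    \<Rightarrow> (gen \<Rightarrow> 'k fa) \<Rightarrow> bool" where
  "super_bialg_iso n p I J phi0 \<longleftrightarrow>
     (let phi = alg_ext phi0 in
       (\<forall>x\<in>I. phi x \<in> J)
     \<and> (\<exists>psi0. let psi = alg_ext psi0 in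
          (\<forall>y\<in>J. psi y \<in> I) \<and> (\<forall>x. psi (phi x) - x \<in> I) \<and> (\<forall>y. phi (psi y) - y \<in> J))
     \<and> (\<forall>w. \<exists>v. homogeneous p (deg_word p w) v \<and> phi (word w) - v \<in> J)
     \<and> (\<forall>x. tens_map phi (cop_superized n p x) - scop n p (phi x) \<in> tens_ideal J)
     \<and> (\<forall>x. counit n (phi x) = counit n x))"

end

theory Submission
  imports Defs
begin

text \<open>
  The isomorphism is induced by \<open>\<phi>(t\<^sup>i\<^sub>j) = u\<^sup>i\<^sub>j g\<^sup>p\<^sup>(\<^sup>j\<^sup>)\<close>, \<open>\<phi>(g) = g\<close> on the free algebra.
  Commuting the \<open>g\<close>'s in \<open>\<phi>(t\<^sup>f\<^sub>c t\<^sup>e\<^sub>d)\<close> to the right produces exactly the Koszul signs relating \<open>R\<close>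
  to its superization, and superizability makes all terms of one FRT relation equally graded, so
  they all end in the same power of \<open>g\<close>: thus \<open>\<phi>\<close> maps each FRT relation to a \<open>g\<close>-multiple of the
  corresponding super FRT relation, and conversely. Since \<open>g\<^sup>2 = 1\<close>, \<open>\<phi>\<close> is an involution modulo
  the \<open>\<int>\<^sub>2\<close>-relations, and \<open>\<phi> \<otimes> \<phi>\<close> turns the superized coproduct into the super coproduct.

  Both quotients are (super) bialgebras because the coproduct of every defining relation lies
  in \<open>I \<otimes> F + F \<otimes> I\<close>; in the super case the graded product on \<open>F \<otimes> F\<close> twists tensor factors by
  the parity automorphism, which preserves the ideal since the relations are homogeneous.
\<close>

lemma lookup_scal [simp]: "Poly_Mapping.lookup (scal c x) w = c * Poly_Mapping.lookup x w"
  unfolding scal_def Poly_Mapping.map.rep_eq by (cases "Poly_Mapping.lookup x w = 0") auto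

lemma scal_add_right: "scal c (x + y) = scal c x + scal c y"
  by (rule poly_mapping_eqI) (simp add: lookup_add algebra_simps)

lemma scal_add_left: "scal (c + d) x = scal c x + scal d x"
  by (rule poly_mapping_eqI) (simp add: lookup_add algebra_simps)

lemma scal_zero_right [simp]: "scal c 0 = 0"
  by (rule poly_mapping_eqI) simp

lemma scal_zero_left [simp]: "scal 0 x = 0"
  by (rule poly_mapping_eqI) simp

lemma scal_one [simp]: "scal 1 x = x"
  by (rule poly_mapping_eqI) simp

lemma scal_scal [simp]: "scal c (scal d x) = scal (c * d) x"
  by (rule poly_mapping_eqI) simp

lemma scal_single [simp]: "scal c (Poly_Mapping.single k d) = Poly_Mapping.single k (c * d)"
  by (rule poly_mapping_eqI) (simp add: lookup_single when_def)

lemma scal_diff_right: "scal c (x - y) = scal c x - scal c y"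
  by (rule poly_mapping_eqI) (simp add: lookup_minus algebra_simps)

lemma scal_minus_left: "scal (- c) x = - scal c x"
  by (rule poly_mapping_eqI) simp

lemma scal_sum_right: "scal c (sum f A) = (\<Sum>i\<in>A. scal c (f i))"
  by (rule poly_mapping_eqI) (simp add: lookup_sum sum_distrib_left)

lemma poly_mapping_sum_single:
  assumes "finite A" "Poly_Mapping.keys x \<subseteq> A"
  shows "x = (\<Sum>a\<in>A. Poly_Mapping.single a (Poly_Mapping.lookup x a))"
  by (rule poly_mapping_eqI) (use assms in \<open>auto simp: lookup_sum lookup_single when_def in_keys_iff\<close>)

lemma poly_mapping_sum_keys: "x = (\<Sum>a\<in>Poly_Mapping.keys x. Poly_Mapping.single a (Poly_Mapping.lookup x a))"
  by (rule poly_mapping_sum_single) auto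

lemma poly_mapping_induct [case_names zero add single]:
  fixes x :: "'a \<Rightarrow>\<^sub>0 'b::comm_monoid_add"
  assumes "P 0" "\<And>a b. P a \<Longrightarrow> P b \<Longrightarrow> P (a + b)" "\<And>k c. P (Poly_Mapping.single k c)"
  shows "P x"
proof -
  have "P (\<Sum>k\<in>A. Poly_Mapping.single k (Poly_Mapping.lookup x k))" if "finite A" for A
    using that by (induction A rule: finite_induct) (auto simp: assms)
  then show ?thesis by (metis finite_keys poly_mapping_sum_keys)
qed

definition bilin_ext :: "('a \<Rightarrow> 'b \<Rightarrow> 'c) \<Rightarrow> ('a \<Rightarrow> 'b \<Rightarrow> 'k::field)
    \<Rightarrow> ('a \<Rightarrow>\<^sub>0 'k) \<Rightarrow> ('b \<Rightarrow>\<^sub>0 'k) \<Rightarrow> ('c \<Rightarrow>\<^sub>0 'k)" where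
  "bilin_ext f s x y = (\<Sum>(a,b)\<in>Poly_Mapping.keys x \<times> Poly_Mapping.keys y.
      Poly_Mapping.single (f a b) (s a b * Poly_Mapping.lookup x a * Poly_Mapping.lookup y b))"

definition lin_ext :: "('a \<Rightarrow> ('b \<Rightarrow>\<^sub>0 'k::field)) \<Rightarrow> ('a \<Rightarrow>\<^sub>0 'k) \<Rightarrow> ('b \<Rightarrow>\<^sub>0 'k)" where
  "lin_ext E x = (\<Sum>w\<in>Poly_Mapping.keys x. scal (Poly_Mapping.lookup x w) (E w))"

definition lin_form :: "('a \<Rightarrow> 'k::field) \<Rightarrow> ('a \<Rightarrow>\<^sub>0 'k) \<Rightarrow> 'k" where
  "lin_form E x = (\<Sum>w\<in>Poly_Mapping.keys x. Poly_Mapping.lookup x w * E w)"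

lemma bilin_ext_superset:
  assumes "finite A" "Poly_Mapping.keys x \<subseteq> A" "finite B" "Poly_Mapping.keys y \<subseteq> B"
  shows "bilin_ext f s x y = (\<Sum>a\<in>A. \<Sum>b\<in>B.
      Poly_Mapping.single (f a b) (s a b * Poly_Mapping.lookup x a * Poly_Mapping.lookup y b))"
proof -
  have "bilin_ext f s x y = (\<Sum>(a,b)\<in>A \<times> B.
      Poly_Mapping.single (f a b) (s a b * Poly_Mapping.lookup x a * Poly_Mapping.lookup y b))"
    unfolding bilin_ext_def
    by (rule sum.mono_neutral_left) (use assms in \<open>auto simp: in_keys_iff\<close>)
  then show ?thesis by (simp add: sum.cartesian_product)
qed

lemma bilin_ext_keys:
  "bilin_ext f s x y = (\<Sum>a\<in>Poly_Mapping.keys x. \<Sum>b\<in>Poly_Mapping.keys y.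
      Poly_Mapping.single (f a b) (s a b * Poly_Mapping.lookup x a * Poly_Mapping.lookup y b))"
  by (rule bilin_ext_superset) auto

lemma lin_ext_superset:
  assumes "finite A" "Poly_Mapping.keys x \<subseteq> A"
  shows "lin_ext E x = (\<Sum>a\<in>A. scal (Poly_Mapping.lookup x a) (E a))"
  unfolding lin_ext_def
  by (rule sum.mono_neutral_left) (use assms in \<open>auto simp: in_keys_iff\<close>)

lemma lin_form_superset:
  assumes "finite A" "Poly_Mapping.keys x \<subseteq> A"
  shows "lin_form E x = (\<Sum>a\<in>A. Poly_Mapping.lookup x a * E a)"
  unfolding lin_form_def
  by (rule sum.mono_neutral_left) (use assms in \<open>auto simp: in_keys_iff\<close>)

lemma bilin_ext_add_left: "bilin_ext f s (x + x') y = bilin_ext f s x y + bilin_ext f s x' y"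
proof -
  let ?A = "Poly_Mapping.keys x \<union> Poly_Mapping.keys x' \<union> Poly_Mapping.keys (x + x')"
  show ?thesis
    by (subst (1 2 3) bilin_ext_superset[where A="?A" and B="Poly_Mapping.keys y"])
       (auto simp: lookup_add algebra_simps single_add sum.distrib)
qed

lemma bilin_ext_add_right: "bilin_ext f s x (y + y') = bilin_ext f s x y + bilin_ext f s x y'"
proof -
  let ?B = "Poly_Mapping.keys y \<union> Poly_Mapping.keys y' \<union> Poly_Mapping.keys (y + y')"
  show ?thesis
    by (subst (1 2 3) bilin_ext_superset[where A="Poly_Mapping.keys x" and B="?B"])
       (auto simp: lookup_add algebra_simps single_add sum.distrib)
qed

lemma bilin_ext_zero_left [simp]: "bilin_ext f s 0 y = 0"
  by (simp add: bilin_ext_def)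

lemma bilin_ext_zero_right [simp]: "bilin_ext f s x 0 = 0"
  by (simp add: bilin_ext_def)

lemma bilin_ext_scal_left: "bilin_ext f s (scal c x) y = scal c (bilin_ext f s x y)"
  by (subst (1 2) bilin_ext_superset[where A="Poly_Mapping.keys x" and B="Poly_Mapping.keys y"])
     (auto simp: in_keys_iff scal_sum_right algebra_simps)

lemma bilin_ext_scal_right: "bilin_ext f s x (scal c y) = scal c (bilin_ext f s x y)"
  by (subst (1 2) bilin_ext_superset[where A="Poly_Mapping.keys x" and B="Poly_Mapping.keys y"])
     (auto simp: in_keys_iff scal_sum_right algebra_simps)

lemma bilin_ext_diff_left: "bilin_ext f s (x - x') y = bilin_ext f s x y - bilin_ext f s x' y"
  by (metis add_diff_cancel bilin_ext_add_left diff_add_cancel)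

lemma bilin_ext_diff_right: "bilin_ext f s x (y - y') = bilin_ext f s x y - bilin_ext f s x y'"
  by (metis add_diff_cancel bilin_ext_add_right diff_add_cancel)

lemma bilin_ext_sum_left: "bilin_ext f s (sum g I) y = (\<Sum>i\<in>I. bilin_ext f s (g i) y)"
  by (induction I rule: infinite_finite_induct) (auto simp: bilin_ext_add_left)

lemma bilin_ext_sum_right: "bilin_ext f s x (sum g I) = (\<Sum>i\<in>I. bilin_ext f s x (g i))"
  by (induction I rule: infinite_finite_induct) (auto simp: bilin_ext_add_right)

lemma bilin_ext_single:
  "bilin_ext f s (Poly_Mapping.single a c) (Poly_Mapping.single b d)
   = Poly_Mapping.single (f a b) (s a b * c * d)"
  by (subst bilin_ext_superset[where A="{a}" and B="{b}"]) auto

lemma bilin_ext_single_left: "bilin_ext f s (Poly_Mapping.single a v) y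
   = (\<Sum>b\<in>Poly_Mapping.keys y. Poly_Mapping.single (f a b) (s a b * v * Poly_Mapping.lookup y b))"
  by (subst bilin_ext_superset[where A="{a}" and B="Poly_Mapping.keys y"]) auto

lemma bilin_ext_single_right: "bilin_ext f s x (Poly_Mapping.single b v)
   = (\<Sum>a\<in>Poly_Mapping.keys x. Poly_Mapping.single (f a b) (s a b * Poly_Mapping.lookup x a * v))"
  by (subst bilin_ext_superset[where A="Poly_Mapping.keys x" and B="{b}"]) auto

lemma bilin_ext_assoc:
  assumes F: "\<And>a b c. F2 (F1 a b) c = F4 a (F3 b c)"
    and S: "\<And>a b c. s1 a b * s2 (F1 a b) c = s3 b c * s4 a (F3 b c)"
  shows "bilin_ext F2 s2 (bilin_ext F1 s1 x y) z = bilin_ext F4 s4 x (bilin_ext F3 s3 y z)"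
proof -
  let ?X = "Poly_Mapping.keys x" and ?Y = "Poly_Mapping.keys y" and ?Z = "Poly_Mapping.keys z"
  let ?x = "Poly_Mapping.lookup x" and ?y = "Poly_Mapping.lookup y" and ?z = "Poly_Mapping.lookup z"
  have coeff: "s2 (F1 a b) c * (s1 a b * X * Y) * Z = s4 a (F3 b c) * X * (s3 b c * Y * Z)"
    for a b c X Y Z
  proof -
    have "s2 (F1 a b) c * (s1 a b * X * Y) * Z = (s1 a b * s2 (F1 a b) c) * (X * Y * Z)"
      by (simp only: mult_ac)
    also have "\<dots> = s4 a (F3 b c) * X * (s3 b c * Y * Z)"
      by (simp only: S mult_ac)
    finally show ?thesis .
  qed
  have "bilin_ext F2 s2 (bilin_ext F1 s1 x y) z = (\<Sum>a\<in>?X. \<Sum>b\<in>?Y. \<Sum>c\<in>?Z.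
      Poly_Mapping.single (F2 (F1 a b) c) (s2 (F1 a b) c * (s1 a b * ?x a * ?y b) * ?z c))"
    by (simp only: bilin_ext_keys[of F1 s1 x y] bilin_ext_sum_left bilin_ext_single_left)
  also have "\<dots> = (\<Sum>a\<in>?X. \<Sum>b\<in>?Y. \<Sum>c\<in>?Z.
      Poly_Mapping.single (F4 a (F3 b c)) (s4 a (F3 b c) * ?x a * (s3 b c * ?y b * ?z c)))"
    by (simp only: F coeff)
  also have "\<dots> = (\<Sum>b\<in>?Y. \<Sum>c\<in>?Z. \<Sum>a\<in>?X.
      Poly_Mapping.single (F4 a (F3 b c)) (s4 a (F3 b c) * ?x a * (s3 b c * ?y b * ?z c)))"
    by (subst sum.swap) (rule sum.cong[OF refl], rule sum.swap)
  also have "\<dots> = bilin_ext F4 s4 x (bilin_ext F3 s3 y z)"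
    by (simp only: bilin_ext_keys[of F3 s3 y z] bilin_ext_sum_right bilin_ext_single_right)
  finally show ?thesis .
qed

lemma bilin_ext_unit_left:
  assumes "\<And>b. f e b = b" "\<And>b. s e b = 1"
  shows "bilin_ext f s (Poly_Mapping.single e 1) y = y"
  by (simp add: bilin_ext_single_left assms) (rule poly_mapping_sum_keys[symmetric])

lemma bilin_ext_unit_right:
  assumes "\<And>b. f b e = b" "\<And>b. s b e = 1"
  shows "bilin_ext f s y (Poly_Mapping.single e 1) = y"
  by (simp add: bilin_ext_single_right assms) (rule poly_mapping_sum_keys[symmetric])

lemma lin_ext_add: "lin_ext E (x + y) = lin_ext E x + lin_ext E y"
proof -
  let ?A = "Poly_Mapping.keys x \<union> Poly_Mapping.keys y \<union> Poly_Mapping.keys (x + y)"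
  show ?thesis
    by (subst (1 2 3) lin_ext_superset[where A="?A"]) (auto simp: lookup_add scal_add_left sum.distrib)
qed

lemma lin_ext_zero [simp]: "lin_ext E 0 = 0"
  by (simp add: lin_ext_def)

lemma lin_ext_scal: "lin_ext E (scal c x) = scal c (lin_ext E x)"
  by (subst (1 2) lin_ext_superset[where A="Poly_Mapping.keys x"]) (auto simp: scal_sum_right in_keys_iff)

lemma lin_ext_diff: "lin_ext E (x - y) = lin_ext E x - lin_ext E y"
  by (metis add_diff_cancel diff_add_cancel lin_ext_add)

lemma lin_ext_sum: "lin_ext E (sum g I) = (\<Sum>i\<in>I. lin_ext E (g i))"
  by (induction I rule: infinite_finite_induct) (auto simp: lin_ext_add)

lemma lin_ext_single [simp]: "lin_ext E (Poly_Mapping.single a c) = scal c (E a)"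
  by (subst lin_ext_superset[where A="{a}"]) auto

lemma lin_ext_compose: "lin_ext E (lin_ext E' x) = lin_ext (\<lambda>a. lin_ext E (E' a)) x"
  by (simp add: lin_ext_def[of E'] lin_ext_sum lin_ext_scal) (simp add: lin_ext_def)

lemma lin_ext_id: "lin_ext (\<lambda>a. Poly_Mapping.single a 1) x = x"
  by (simp add: lin_ext_def) (rule poly_mapping_sum_keys[symmetric])

lemma lin_ext_cong: "(\<And>a. a \<in> Poly_Mapping.keys x \<Longrightarrow> E a = E' a) \<Longrightarrow> lin_ext E x = lin_ext E' x"
  by (simp add: lin_ext_def)

lemma bilin_ext_lin_ext:
  "bilin_ext F s (lin_ext E x) (lin_ext E' y) = (\<Sum>a\<in>Poly_Mapping.keys x. \<Sum>b\<in>Poly_Mapping.keys y.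
     scal (Poly_Mapping.lookup x a * Poly_Mapping.lookup y b) (bilin_ext F s (E a) (E' b)))"
  by (simp add: lin_ext_def bilin_ext_sum_left bilin_ext_sum_right bilin_ext_scal_left
      bilin_ext_scal_right scal_sum_right mult.commute sum.swap[of _ "Poly_Mapping.keys x"])

lemma lin_ext_diff_fun: "lin_ext E x - lin_ext E' x = lin_ext (\<lambda>w. E w - E' w) x"
  by (simp add: lin_ext_def sum_subtractf scal_diff_right)

lemma lin_form_single [simp]: "lin_form E (Poly_Mapping.single a c) = c * E a"
  by (subst lin_form_superset[where A="{a}"]) auto

lemma lin_form_add: "lin_form E (x + y) = lin_form E x + lin_form E y"
proof -
  let ?A = "Poly_Mapping.keys x \<union> Poly_Mapping.keys y \<union> Poly_Mapping.keys (x + y)"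
  show ?thesis
    by (subst (1 2 3) lin_form_superset[where A="?A"]) (auto simp: lookup_add algebra_simps sum.distrib)
qed

lemma lin_form_zero [simp]: "lin_form E 0 = 0"
  by (simp add: lin_form_def)

lemma lin_form_sum: "lin_form E (sum g I) = (\<Sum>i\<in>I. lin_form E (g i))"
  by (induction I rule: infinite_finite_induct) (auto simp: lin_form_add)

lemma lin_form_scal: "lin_form E (scal c x) = c * lin_form E x"
  by (subst (1 2) lin_form_superset[where A="Poly_Mapping.keys x"])
     (auto simp: sum_distrib_left in_keys_iff algebra_simps)

lemma lin_form_diff: "lin_form E (x - y) = lin_form E x - lin_form E y"
  by (metis add_diff_cancel diff_add_cancel lin_form_add)

lemma sgn_add: "(sgn (a + b) :: 'k::field) = sgn a * sgn b"
  by (simp add: sgn_def power_add)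

lemma sgn_0 [simp]: "sgn 0 = 1"
  by (simp add: sgn_def)

lemma sgn_cong_parity: "even a = even b \<Longrightarrow> (sgn a :: 'k::field) = sgn b"
  by (cases "even a") (auto simp: sgn_def)

lemma sgn_mult_self: "(sgn a :: 'k::field) * sgn a = 1"
  by (simp add: sgn_def flip: power_add)

lemma sgn_mult_sgn_cong_parity:
  "even (x + y) = even (u + v) \<Longrightarrow> (sgn x :: 'k::field) * sgn y = sgn u * sgn v"
  unfolding sgn_add[symmetric] by (rule sgn_cong_parity)

lemma sgn_mult_assoc_parity:
  assumes "even (x + y) = even (u + v)"
  shows "(sgn x :: 'k::field) * (sgn y * c) = sgn u * (sgn v * c)"
  by (simp only: mult.assoc[symmetric] sgn_mult_sgn_cong_parity[OF assms])

lemma sgn_mult_commute_parity: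
  assumes "even (x + y) = even (u + v)"
  shows "(sgn x :: 'k::field) * c * sgn y = sgn u * (sgn v * c)"
proof -
  have "(sgn x :: 'k) * c * sgn y = sgn x * (sgn y * c)"
    by (simp only: mult_ac)
  then show ?thesis
    by (simp only: sgn_mult_assoc_parity[OF assms])
qed

lemma sgn_add_chain: "(sgn (a + b) :: 'k::field) * sgn (b + c) = sgn (a + c)"
  unfolding sgn_add[symmetric] by (rule sgn_cong_parity) (auto simp: even_add)

lemma deg_word_Nil [simp]: "deg_word q [] = 0"
  by (simp add: deg_word_def)

lemma deg_word_Cons: "deg_word q (x # w) = (deg_gen q x + deg_word q w) mod 2"
  by (simp add: deg_word_def mod_add_right_eq)

lemma deg_word_append: "deg_word q (u @ v) = (deg_word q u + deg_word q v) mod 2"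
  by (simp add: deg_word_def mod_add_eq)

lemma deg_word_replicate_G [simp]: "deg_word q (replicate m G) = 0"
  by (induction m) (auto simp: deg_word_Cons)

lemma deg_word_G_Cons [simp]: "deg_word q (G # w) = deg_word q w"
  by (simp add: deg_word_Cons deg_word_def)

lemma deg_word_less_2: "deg_word q w < 2"
  by (simp add: deg_word_def)

lemma deg_word_T: "deg_word q [T i j] = (q i + q j) mod 2"
  by (simp add: deg_word_def)

lemma deg_word_TT: "deg_word q [T a b, T c d] = (q a + q b + q c + q d) mod 2"
  by (simp add: deg_word_def mod_add_eq add.assoc)

lemma deg_word_trivial_grading [simp]: "deg_word (\<lambda>_. 0) w = 0"
proof (induction w)
  case (Cons x w) then show ?case by (cases x) (auto simp: deg_word_Cons)
qed simp

definition pair_append :: "gen list \<times> gen list \<Rightarrow> gen list \<times> gen list \<Rightarrow> gen list \<times> gen list" where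
  "pair_append a b = (fst a @ fst b, snd a @ snd b)"

definition koszul_sign :: "(nat \<Rightarrow> nat) \<Rightarrow> gen list \<times> gen list \<Rightarrow> gen list \<times> gen list \<Rightarrow> 'k::field" where
  "koszul_sign q a b = sgn (deg_word q (snd a) * deg_word q (fst b))"

definition tens_one :: "'k::field fa2" where
  "tens_one = Poly_Mapping.single ([], []) 1"

lemma fmul_as_bilin_ext: "fmul x y = bilin_ext (@) (\<lambda>_ _. 1) x y"
  by (simp add: fmul_def bilin_ext_def)

lemma tens_as_bilin_ext: "tens x y = bilin_ext Pair (\<lambda>_ _. 1) x y"
  by (simp add: tens_def bilin_ext_def)

lemma stmul_as_bilin_ext: "stmul q x y = bilin_ext pair_append (koszul_sign q) x y"
  unfolding stmul_def bilin_ext_def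
  by (rule sum.cong) (auto simp: pair_append_def koszul_sign_def)

lemma tmul_eq_stmul_trivial_grading: "tmul = stmul (\<lambda>_. 0)"
  unfolding tmul_def stmul_def by (intro ext sum.cong) auto

lemma word_as_single: "word w = Poly_Mapping.single w 1"
  by (simp add: word_def)

lemma gn_as_word: "gn x = word [x]"
  by (simp add: gn_def)

lemma fmul_single [simp]:
  "fmul (Poly_Mapping.single u c) (Poly_Mapping.single v d) = Poly_Mapping.single (u @ v) (c * d)"
  by (simp add: fmul_as_bilin_ext bilin_ext_single)

lemma tens_single [simp]:
  "tens (Poly_Mapping.single u c) (Poly_Mapping.single v d) = Poly_Mapping.single (u, v) (c * d)"
  by (simp add: tens_as_bilin_ext bilin_ext_single)

lemma stmul_single:
  "stmul q (Poly_Mapping.single (u, v) c) (Poly_Mapping.single (u', v') d)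
   = Poly_Mapping.single (u @ u', v @ v') (sgn (deg_word q v * deg_word q u') * c * d)"
  by (simp add: stmul_as_bilin_ext bilin_ext_single pair_append_def koszul_sign_def)

lemma fmul_word [simp]: "fmul (word u) (word v) = word (u @ v)"
  by (simp add: word_as_single)

lemma fmul_gn [simp]: "fmul (gn x) (gn y) = word [x, y]"
  by (simp add: gn_as_word)

lemma tens_word: "tens (word u) (word v) = Poly_Mapping.single (u, v) 1"
  by (simp add: word_as_single)

lemma fmul_assoc: "fmul (fmul x y) z = fmul x (fmul y z)"
  unfolding fmul_as_bilin_ext by (rule bilin_ext_assoc) auto

lemma fmul_fone_left [simp]: "fmul fone x = x"
  unfolding fmul_as_bilin_ext fone_def word_def by (rule bilin_ext_unit_left) auto

lemma fmul_fone_right [simp]: "fmul x fone = x"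
  unfolding fmul_as_bilin_ext fone_def word_def by (rule bilin_ext_unit_right) auto

lemma koszul_sign_cocycle:
  "koszul_sign q a b * koszul_sign q (pair_append a b) c
   = (koszul_sign q b c * koszul_sign q a (pair_append b c) :: 'k::field)"
proof -
  obtain u v u' v' u'' v'' where abc: "a = (u, v)" "b = (u', v')" "c = (u'', v'')"
    by (metis prod.exhaust)
  let ?dv = "deg_word q v" and ?dv' = "deg_word q v'" and ?du' = "deg_word q u'" and ?du'' = "deg_word q u''"
  have "koszul_sign q a b * koszul_sign q (pair_append a b) c = (sgn (?dv * ?du' + (?dv + ?dv') * ?du'') :: 'k)"
    by (simp add: abc koszul_sign_def pair_append_def deg_word_append sgn_add[symmetric])
       (rule sgn_cong_parity, simp add: mod_mult_right_eq mod_mult_left_eq even_mult_iff)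
  also have "\<dots> = sgn (?dv' * ?du'' + ?dv * (?du' + ?du''))"
    by (rule arg_cong[where f=sgn]) (simp add: algebra_simps)
  also have "\<dots> = koszul_sign q b c * koszul_sign q a (pair_append b c)"
    by (simp add: abc koszul_sign_def pair_append_def deg_word_append sgn_add[symmetric])
       (rule sgn_cong_parity, simp add: mod_mult_right_eq mod_mult_left_eq even_mult_iff)
  finally show ?thesis .
qed

lemma pair_append_assoc: "pair_append (pair_append a b) c = pair_append a (pair_append b c)"
  by (simp add: pair_append_def)

lemma stmul_assoc: "stmul q (stmul q x y) z = stmul q x (stmul q y z)"
  unfolding stmul_as_bilin_ext
  by (rule bilin_ext_assoc) (auto simp: pair_append_assoc koszul_sign_cocycle)

lemma stmul_tens_one_left [simp]: "stmul q tens_one x = x"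
  unfolding stmul_as_bilin_ext tens_one_def
  by (rule bilin_ext_unit_left) (auto simp: pair_append_def koszul_sign_def)

lemma stmul_tens_one_right [simp]: "stmul q x tens_one = x"
  unfolding stmul_as_bilin_ext tens_one_def
  by (rule bilin_ext_unit_right) (auto simp: pair_append_def koszul_sign_def)

lemma fmul_add_left: "fmul (x + x') y = fmul x y + fmul x' y"
  by (simp add: fmul_as_bilin_ext bilin_ext_add_left)
lemma fmul_add_right: "fmul x (y + y') = fmul x y + fmul x y'"
  by (simp add: fmul_as_bilin_ext bilin_ext_add_right)
lemma fmul_diff_left: "fmul (x - x') y = fmul x y - fmul x' y"
  by (simp add: fmul_as_bilin_ext bilin_ext_diff_left)
lemma fmul_diff_right: "fmul x (y - y') = fmul x y - fmul x y'"
  by (simp add: fmul_as_bilin_ext bilin_ext_diff_right)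
lemma fmul_zero_left [simp]: "fmul 0 y = 0"
  by (simp add: fmul_as_bilin_ext)
lemma fmul_zero_right [simp]: "fmul x 0 = 0"
  by (simp add: fmul_as_bilin_ext)
lemma fmul_scal_left: "fmul (scal c x) y = scal c (fmul x y)"
  by (simp add: fmul_as_bilin_ext bilin_ext_scal_left)
lemma fmul_scal_right: "fmul x (scal c y) = scal c (fmul x y)"
  by (simp add: fmul_as_bilin_ext bilin_ext_scal_right)
lemma fmul_sum_left: "fmul (sum g I) y = (\<Sum>i\<in>I. fmul (g i) y)"
  by (simp add: fmul_as_bilin_ext bilin_ext_sum_left)
lemma fmul_sum_right: "fmul x (sum g I) = (\<Sum>i\<in>I. fmul x (g i))"
  by (simp add: fmul_as_bilin_ext bilin_ext_sum_right)

lemma tens_diff_left: "tens (x - x') y = tens x y - tens x' y"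
  by (simp add: tens_as_bilin_ext bilin_ext_diff_left)
lemma tens_diff_right: "tens x (y - y') = tens x y - tens x y'"
  by (simp add: tens_as_bilin_ext bilin_ext_diff_right)
lemma tens_scal_left: "tens (scal c x) y = scal c (tens x y)"
  by (simp add: tens_as_bilin_ext bilin_ext_scal_left)
lemma tens_scal_right: "tens x (scal c y) = scal c (tens x y)"
  by (simp add: tens_as_bilin_ext bilin_ext_scal_right)
lemma tens_sum_left: "tens (sum g I) y = (\<Sum>i\<in>I. tens (g i) y)"
  by (simp add: tens_as_bilin_ext bilin_ext_sum_left)
lemma tens_sum_right: "tens x (sum g I) = (\<Sum>i\<in>I. tens x (g i))"
  by (simp add: tens_as_bilin_ext bilin_ext_sum_right)

lemma stmul_add_left: "stmul q (x + x') y = stmul q x y + stmul q x' y"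
  by (simp add: stmul_as_bilin_ext bilin_ext_add_left)
lemma stmul_add_right: "stmul q x (y + y') = stmul q x y + stmul q x y'"
  by (simp add: stmul_as_bilin_ext bilin_ext_add_right)
lemma stmul_diff_left: "stmul q (x - x') y = stmul q x y - stmul q x' y"
  by (simp add: stmul_as_bilin_ext bilin_ext_diff_left)
lemma stmul_diff_right: "stmul q x (y - y') = stmul q x y - stmul q x y'"
  by (simp add: stmul_as_bilin_ext bilin_ext_diff_right)
lemma stmul_sum_left: "stmul q (sum g I) y = (\<Sum>i\<in>I. stmul q (g i) y)"
  by (simp add: stmul_as_bilin_ext bilin_ext_sum_left)
lemma stmul_sum_right: "stmul q x (sum g I) = (\<Sum>i\<in>I. stmul q x (g i))"
  by (simp add: stmul_as_bilin_ext bilin_ext_sum_right)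
lemma stmul_zero_left [simp]: "stmul q 0 y = 0"
  by (simp add: stmul_as_bilin_ext)
lemma stmul_zero_right [simp]: "stmul q x 0 = 0"
  by (simp add: stmul_as_bilin_ext)

lemma word_eval_Nil [simp]: "word_eval mul one h [] = one"
  by (simp add: word_eval_def)

lemma word_eval_Cons [simp]: "word_eval mul one h (x # w) = mul (h x) (word_eval mul one h w)"
  by (simp add: word_eval_def)

lemma word_eval_append:
  assumes "\<And>a b c. mul (mul a b) c = mul a (mul b c)" "\<And>a. mul one a = a"
  shows "word_eval mul one h (u @ v) = mul (word_eval mul one h u) (word_eval mul one h v)"
  by (induction u) (auto simp: assms)

lemma lin_ext_fmul:
  assumes "\<And>u v. E (u @ v) = bilin_ext F s (E u) (E v)"
  shows "lin_ext E (fmul x y) = bilin_ext F s (lin_ext E x) (lin_ext E y)"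
proof -
  let ?X = "Poly_Mapping.keys x" and ?Y = "Poly_Mapping.keys y"
  have "lin_ext E (fmul x y) = (\<Sum>a\<in>?X. \<Sum>b\<in>?Y.
      scal (Poly_Mapping.lookup x a * Poly_Mapping.lookup y b) (bilin_ext F s (E a) (E b)))"
    by (simp add: fmul_as_bilin_ext bilin_ext_keys lin_ext_sum assms)
  then show ?thesis
    by (simp add: bilin_ext_lin_ext)
qed

lemma lin_form_fmul:
  assumes "\<And>u v. E (u @ v) = E u * E v"
  shows "lin_form E (fmul x y) = lin_form E x * lin_form E y"
proof -
  let ?X = "Poly_Mapping.keys x" and ?Y = "Poly_Mapping.keys y"
  have "lin_form E (fmul x y) = (\<Sum>a\<in>?X. \<Sum>b\<in>?Y.
      (Poly_Mapping.lookup x a * Poly_Mapping.lookup y b) * (E a * E b))"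
    by (simp add: fmul_as_bilin_ext bilin_ext_keys lin_form_sum assms)
  also have "\<dots> = lin_form E x * lin_form E y"
    by (simp add: lin_form_def sum_product algebra_simps)
  finally show ?thesis .
qed

lemma alg_ext_as_lin_ext: "alg_ext h = lin_ext (word_eval fmul fone h)"
  by (simp add: fun_eq_iff alg_ext_def lin_ext_def)

lemma scop_as_lin_ext: "scop n q = lin_ext (word_eval (stmul q) tens_one (cop_gen n))"
  by (simp add: fun_eq_iff scop_def alg_ext2_def lin_ext_def tens_one_def)

lemma counit_as_lin_form: "counit n = lin_form (word_eval (*) 1 (counit_gen n))"
  by (simp add: fun_eq_iff counit_def alg_ext_k_def lin_form_def)

lemma cop_eq_scop_trivial_grading: "cop n = scop n (\<lambda>_. 0)"
  by (simp add: cop_def scop_def tmul_eq_stmul_trivial_grading)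

lemma alg_ext_fmul: "alg_ext h (fmul x y) = fmul (alg_ext h x) (alg_ext h y)"
proof -
  have "lin_ext (word_eval fmul fone h) (fmul x y) = bilin_ext (@) (\<lambda>_ _. 1)
      (lin_ext (word_eval fmul fone h) x) (lin_ext (word_eval fmul fone h) y)"
    by (rule lin_ext_fmul) (simp add: word_eval_append fmul_assoc fmul_as_bilin_ext[symmetric])
  then show ?thesis by (simp add: alg_ext_as_lin_ext fmul_as_bilin_ext[symmetric])
qed

lemma scop_fmul: "scop n q (fmul x y) = stmul q (scop n q x) (scop n q y)"
proof -
  let ?E = "word_eval (stmul q) tens_one (cop_gen n)"
  have "lin_ext ?E (fmul x y) = bilin_ext pair_append (koszul_sign q) (lin_ext ?E x) (lin_ext ?E y)"
    by (rule lin_ext_fmul) (simp add: word_eval_append stmul_assoc stmul_as_bilin_ext[symmetric])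
  then show ?thesis by (simp add: scop_as_lin_ext stmul_as_bilin_ext[symmetric])
qed

lemma counit_fmul: "counit n (fmul x y) = counit n x * counit n y"
  unfolding counit_as_lin_form by (rule lin_form_fmul) (simp add: word_eval_append)

lemma alg_ext_word: "alg_ext h (word w) = word_eval fmul fone h w"
  by (simp add: alg_ext_as_lin_ext word_as_single)

lemma scop_word: "scop n q (word w) = word_eval (stmul q) tens_one (cop_gen n) w"
  by (simp add: scop_as_lin_ext word_as_single)

lemma counit_word: "counit n (word w) = prod_list (map (counit_gen n) w)"
  by (induction w) (simp_all add: counit_as_lin_form word_as_single)

lemma alg_ext_diff: "alg_ext h (x - y) = alg_ext h x - alg_ext h y"
  by (simp add: alg_ext_as_lin_ext lin_ext_diff)
lemma alg_ext_scal: "alg_ext h (scal c x) = scal c (alg_ext h x)"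
  by (simp add: alg_ext_as_lin_ext lin_ext_scal)
lemma alg_ext_sum: "alg_ext h (sum g I) = (\<Sum>i\<in>I. alg_ext h (g i))"
  by (simp add: alg_ext_as_lin_ext lin_ext_sum)

lemma scop_add: "scop n q (x + y) = scop n q x + scop n q y"
  by (simp add: scop_as_lin_ext lin_ext_add)
lemma scop_diff: "scop n q (x - y) = scop n q x - scop n q y"
  by (simp add: scop_as_lin_ext lin_ext_diff)
lemma scop_scal: "scop n q (scal c x) = scal c (scop n q x)"
  by (simp add: scop_as_lin_ext lin_ext_scal)
lemma scop_sum: "scop n q (sum g I) = (\<Sum>i\<in>I. scop n q (g i))"
  by (simp add: scop_as_lin_ext lin_ext_sum)
lemma scop_zero [simp]: "scop n q 0 = 0"
  by (simp add: scop_as_lin_ext)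

lemma counit_add: "counit n (x + y) = counit n x + counit n y"
  by (simp add: counit_as_lin_form lin_form_add)
lemma counit_diff: "counit n (x - y) = counit n x - counit n y"
  by (simp add: counit_as_lin_form lin_form_diff)
lemma counit_scal: "counit n (scal c x) = c * counit n x"
  by (simp add: counit_as_lin_form lin_form_scal)
lemma counit_sum: "counit n (sum g I) = (\<Sum>i\<in>I. counit n (g i))"
  by (simp add: counit_as_lin_form lin_form_sum)
lemma counit_zero [simp]: "counit n 0 = 0"
  by (simp add: counit_as_lin_form)

lemma ideal_gen_scal: "x \<in> ideal_gen S \<Longrightarrow> scal c x \<in> ideal_gen S"
proof (induction rule: ideal_gen.induct)
  case (gen r a b)
  then show ?case using ideal_gen.gen[of r S "scal c a" b] by (simp add: fmul_scal_left)
qed (simp_all add: ideal_gen.zero scal_add_right ideal_gen.add)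

lemma ideal_gen_diff: "x \<in> ideal_gen S \<Longrightarrow> y \<in> ideal_gen S \<Longrightarrow> x - y \<in> ideal_gen S"
  using ideal_gen.add[OF _ ideal_gen_scal[of y S "-1"]] by (simp add: scal_minus_left)

lemma ideal_gen_generator: "r \<in> S \<Longrightarrow> r \<in> ideal_gen S"
  using ideal_gen.gen[of r S fone fone] by simp

lemma ideal_gen_sum: "(\<And>i. i \<in> I \<Longrightarrow> g i \<in> ideal_gen S) \<Longrightarrow> sum g I \<in> ideal_gen S"
  by (induction I rule: infinite_finite_induct) (auto simp: ideal_gen.zero ideal_gen.add)

lemma ideal_gen_fmul_left: "x \<in> ideal_gen S \<Longrightarrow> fmul a x \<in> ideal_gen S"
proof (induction rule: ideal_gen.induct)
  case (gen r a' b)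
  then show ?case using ideal_gen.gen[of r S "fmul a a'" b] by (simp add: fmul_assoc)
qed (simp_all add: ideal_gen.zero fmul_add_right ideal_gen.add)

lemma ideal_gen_fmul_right: "x \<in> ideal_gen S \<Longrightarrow> fmul x b \<in> ideal_gen S"
proof (induction rule: ideal_gen.induct)
  case (gen r a b')
  then show ?case using ideal_gen.gen[of r S a "fmul b' b"] by (simp add: fmul_assoc)
qed (simp_all add: ideal_gen.zero fmul_add_left ideal_gen.add)

lemma ideal_gen_diff_cancel: "x - y \<in> ideal_gen S \<Longrightarrow> y \<in> ideal_gen S \<Longrightarrow> x \<in> ideal_gen S"
  using ideal_gen.add[of "x - y" S y] by simp

lemma ideal_gen_diff_trans:
  "x - scal c y \<in> ideal_gen S \<Longrightarrow> y - scal d z \<in> ideal_gen S \<Longrightarrow> x - scal (c * d) z \<in> ideal_gen S"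
proof -
  assume "x - scal c y \<in> ideal_gen S" "y - scal d z \<in> ideal_gen S"
  then have "(x - scal c y) + scal c (y - scal d z) \<in> ideal_gen S"
    by (intro ideal_gen.add ideal_gen_scal)
  then show ?thesis by (simp add: scal_diff_right)
qed

lemma ideal_gen_lin_ext: "(\<And>w. E w \<in> ideal_gen S) \<Longrightarrow> lin_ext E x \<in> ideal_gen S"
  unfolding lin_ext_def by (intro ideal_gen_sum ideal_gen_scal)

lemma alg_ext_ideal_gen:
  assumes "\<And>r. r \<in> S \<Longrightarrow> alg_ext h r \<in> ideal_gen S'"
  shows "x \<in> ideal_gen S \<Longrightarrow> alg_ext h x \<in> ideal_gen S'"
proof (induction rule: ideal_gen.induct)
  case (gen r a b)
  then show ?case using assms by (simp add: alg_ext_fmul ideal_gen_fmul_left ideal_gen_fmul_right)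
qed (simp_all add: alg_ext_as_lin_ext lin_ext_add ideal_gen.zero ideal_gen.add)

lemma tens_ideal_scal: "x \<in> tens_ideal (ideal_gen S) \<Longrightarrow> scal c x \<in> tens_ideal (ideal_gen S)"
proof (induction rule: tens_ideal.induct)
  case (left x b) then show ?case by (metis ideal_gen_scal tens_ideal.left tens_scal_left)
next
  case (right x a) then show ?case by (metis ideal_gen_scal tens_ideal.right tens_scal_right)
qed (simp_all add: tens_ideal.zero scal_add_right tens_ideal.add)

lemma tens_ideal_sum: "(\<And>i. i \<in> I \<Longrightarrow> g i \<in> tens_ideal K) \<Longrightarrow> sum g I \<in> tens_ideal K"
  by (induction I rule: infinite_finite_induct) (auto simp: tens_ideal.zero tens_ideal.add)

lemma tens_ideal_lin_ext:
  "(\<And>w. E w \<in> tens_ideal (ideal_gen S)) \<Longrightarrow> lin_ext E x \<in> tens_ideal (ideal_gen S)"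
  unfolding lin_ext_def by (intro tens_ideal_sum tens_ideal_scal)

section \<open>The parity twist\<close>

text \<open>Conjugation by \<open>g\<^sup>m\<close> in the quotient.\<close>

definition parity_twist :: "(nat \<Rightarrow> nat) \<Rightarrow> nat \<Rightarrow> 'k::field fa \<Rightarrow> 'k fa" where
  "parity_twist q m = lin_ext (\<lambda>w. Poly_Mapping.single w (sgn (m * deg_word q w)))"

lemma parity_twist_eq:
  "parity_twist q m x = (\<Sum>u\<in>Poly_Mapping.keys x.
     Poly_Mapping.single u (sgn (m * deg_word q u) * Poly_Mapping.lookup x u))"
  by (simp add: parity_twist_def lin_ext_def mult.commute)

lemma parity_twist_fmul:
  fixes x y :: "'k::field fa"
  shows "parity_twist q m (fmul x y) = fmul (parity_twist q m x) (parity_twist q m y)"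
proof -
  let ?E = "\<lambda>w. Poly_Mapping.single w (sgn (m * deg_word q w)) :: 'k fa"
  have "lin_ext ?E (fmul x y) = bilin_ext (@) (\<lambda>_ _. 1) (lin_ext ?E x) (lin_ext ?E y)"
  proof (rule lin_ext_fmul)
    fix u v :: "gen list"
    have "(sgn (m * deg_word q (u @ v)) :: 'k) = sgn (m * deg_word q u) * sgn (m * deg_word q v)"
      by (simp add: deg_word_append sgn_add[symmetric])
         (rule sgn_cong_parity, auto simp: mod_mult_right_eq even_mult_iff algebra_simps)
    then show "?E (u @ v) = bilin_ext (@) (\<lambda>_ _. 1) (?E u) (?E v)"
      by (simp add: bilin_ext_single)
  qed
  then show ?thesis by (simp add: parity_twist_def fmul_as_bilin_ext)
qed

lemma parity_twist_homogeneous: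
  assumes "homogeneous q e r"
  shows "parity_twist q m r = scal (sgn (m * e)) r"
proof -
  have "parity_twist q m r = (\<Sum>w\<in>Poly_Mapping.keys r.
      scal (sgn (m * e)) (Poly_Mapping.single w (Poly_Mapping.lookup r w)))"
    using assms by (simp add: parity_twist_eq homogeneous_def)
  also have "\<dots> = scal (sgn (m * e)) r"
    by (metis scal_sum_right poly_mapping_sum_keys)
  finally show ?thesis .
qed

definition twist_closed :: "(nat \<Rightarrow> nat) \<Rightarrow> 'k::field fa set \<Rightarrow> bool" where
  "twist_closed q K \<longleftrightarrow> (\<forall>x\<in>K. \<forall>m. parity_twist q m x \<in> K)"

lemma twist_closed_ideal_gen:
  assumes hom: "\<forall>r\<in>S. \<exists>e. homogeneous q e r"
  shows "twist_closed q (ideal_gen S)"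
proof -
  have "parity_twist q m x \<in> ideal_gen S" if "x \<in> ideal_gen S" for x m
    using that
  proof (induction rule: ideal_gen.induct)
    case (gen r a b)
    obtain e where "homogeneous q e r" using hom gen by blast
    then show ?case using gen
      by (simp add: parity_twist_fmul parity_twist_homogeneous fmul_scal_left fmul_scal_right
          ideal_gen_scal ideal_gen.gen)
  qed (simp_all add: parity_twist_def lin_ext_add ideal_gen.zero ideal_gen.add)
  then show ?thesis by (simp add: twist_closed_def)
qed

lemma twist_closed_trivial_grading: "twist_closed (\<lambda>_. 0) K"
  by (simp add: twist_closed_def parity_twist_def lin_ext_id)

lemma fmul_single_right:
  "fmul x (Poly_Mapping.single w c)
   = (\<Sum>u\<in>Poly_Mapping.keys x. Poly_Mapping.single (u @ w) (Poly_Mapping.lookup x u * c))"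
  by (simp add: fmul_as_bilin_ext bilin_ext_single_right)

lemma fmul_single_left:
  "fmul (Poly_Mapping.single w c) x
   = (\<Sum>u\<in>Poly_Mapping.keys x. Poly_Mapping.single (w @ u) (c * Poly_Mapping.lookup x u))"
  by (simp add: fmul_as_bilin_ext bilin_ext_single_left)

text \<open>In the super tensor product, moving \<open>u'\<close> past the right factor \<open>b\<close> (resp. \<open>v\<close> past the
  left factor \<open>x\<close>) is the parity twist of that factor.\<close>

lemma stmul_tens_single:
  "stmul q (tens x b) (Poly_Mapping.single (u', v') \<beta>)
   = tens (fmul x (word u')) (scal \<beta> (fmul (parity_twist q (deg_word q u') b) (word v')))"
proof -
  let ?x = "Poly_Mapping.lookup x" and ?b = "Poly_Mapping.lookup b"
  have "stmul q (tens x b) (Poly_Mapping.single (u', v') \<beta>) =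
    (\<Sum>u\<in>Poly_Mapping.keys x. \<Sum>v\<in>Poly_Mapping.keys b. Poly_Mapping.single (u @ u', v @ v')
       (sgn (deg_word q v * deg_word q u') * (?x u * ?b v) * \<beta>))"
    by (simp add: tens_as_bilin_ext bilin_ext_keys stmul_sum_left stmul_single)
  also have "\<dots> = tens (\<Sum>u\<in>Poly_Mapping.keys x. Poly_Mapping.single (u @ u') (?x u * 1))
      (\<Sum>v\<in>Poly_Mapping.keys b.
        Poly_Mapping.single (v @ v') (\<beta> * (sgn (deg_word q u' * deg_word q v) * ?b v * 1)))"
    by (simp add: tens_sum_left tens_sum_right mult_ac sum.swap[of _ "Poly_Mapping.keys b"])
  also have "\<dots> = tens (fmul x (word u')) (scal \<beta> (fmul (parity_twist q (deg_word q u') b) (word v')))"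
    unfolding word_as_single fmul_single_right[of x]
    by (simp only: parity_twist_eq fmul_sum_left fmul_single scal_sum_right scal_single)
  finally show ?thesis .
qed

lemma stmul_single_tens:
  "stmul q (Poly_Mapping.single (u, v) \<alpha>) (tens x b)
   = tens (scal \<alpha> (fmul (word u) (parity_twist q (deg_word q v) x))) (fmul (word v) b)"
proof -
  let ?x = "Poly_Mapping.lookup x" and ?b = "Poly_Mapping.lookup b"
  have "stmul q (Poly_Mapping.single (u, v) \<alpha>) (tens x b) =
    (\<Sum>u'\<in>Poly_Mapping.keys x. \<Sum>v'\<in>Poly_Mapping.keys b. Poly_Mapping.single (u @ u', v @ v')
       (sgn (deg_word q v * deg_word q u') * \<alpha> * (?x u' * ?b v')))"
    by (simp add: tens_as_bilin_ext bilin_ext_keys stmul_sum_right stmul_single)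
  also have "\<dots> = tens (\<Sum>u'\<in>Poly_Mapping.keys x.
        Poly_Mapping.single (u @ u') (\<alpha> * (1 * (sgn (deg_word q v * deg_word q u') * ?x u'))))
      (\<Sum>v'\<in>Poly_Mapping.keys b. Poly_Mapping.single (v @ v') (1 * ?b v'))"
    by (simp add: tens_sum_left tens_sum_right mult_ac sum.swap[of _ "Poly_Mapping.keys b"])
  also have "\<dots> = tens (scal \<alpha> (fmul (word u) (parity_twist q (deg_word q v) x))) (fmul (word v) b)"
    unfolding word_as_single fmul_single_left[of _ _ b]
    by (simp only: parity_twist_eq fmul_sum_right fmul_single scal_sum_right scal_single)
  finally show ?thesis .
qed

lemma tens_ideal_stmul_left:
  assumes "X \<in> tens_ideal (ideal_gen S)" "twist_closed q (ideal_gen S)"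
  shows "stmul q X Y \<in> tens_ideal (ideal_gen S)"
  using assms(1)
proof (induction rule: tens_ideal.induct)
  case (left x b)
  have "stmul q (tens x b) (Poly_Mapping.single (u', v') \<beta>) \<in> tens_ideal (ideal_gen S)" for u' v' \<beta>
    unfolding stmul_tens_single using left by (intro tens_ideal.left ideal_gen_fmul_right)
  then show ?case
    by (subst poly_mapping_sum_keys[of Y]) (auto simp: stmul_sum_right intro: tens_ideal_sum)
next
  case (right x a)
  have "stmul q (tens a x) (Poly_Mapping.single (u', v') \<beta>) \<in> tens_ideal (ideal_gen S)" for u' v' \<beta>
    unfolding stmul_tens_single using right assms(2)
    by (intro tens_ideal.right ideal_gen_scal ideal_gen_fmul_right) (auto simp: twist_closed_def)
  then show ?case
    by (subst poly_mapping_sum_keys[of Y]) (auto simp: stmul_sum_right intro: tens_ideal_sum)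
qed (simp_all add: tens_ideal.zero stmul_add_left tens_ideal.add)

lemma tens_ideal_stmul_right:
  assumes "Y \<in> tens_ideal (ideal_gen S)" "twist_closed q (ideal_gen S)"
  shows "stmul q X Y \<in> tens_ideal (ideal_gen S)"
  using assms(1)
proof (induction rule: tens_ideal.induct)
  case (left x b)
  have "stmul q (Poly_Mapping.single (u, v) \<alpha>) (tens x b) \<in> tens_ideal (ideal_gen S)" for u v \<alpha>
    unfolding stmul_single_tens using left assms(2)
    by (intro tens_ideal.left ideal_gen_scal ideal_gen_fmul_left) (auto simp: twist_closed_def)
  then show ?case
    by (subst poly_mapping_sum_keys[of X]) (auto simp: stmul_sum_left intro: tens_ideal_sum)
next
  case (right x a)
  have "stmul q (Poly_Mapping.single (u, v) \<alpha>) (tens a x) \<in> tens_ideal (ideal_gen S)" for u v \<alpha>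
    unfolding stmul_single_tens using right by (intro tens_ideal.right ideal_gen_fmul_left)
  then show ?case
    by (subst poly_mapping_sum_keys[of X]) (auto simp: stmul_sum_left intro: tens_ideal_sum)
qed (simp_all add: tens_ideal.zero stmul_add_right tens_ideal.add)

section \<open>The coproduct on the defining relations\<close>

lemma cop_gen_T:
  "i \<in> {1..n} \<Longrightarrow> j \<in> {1..n} \<Longrightarrow> cop_gen n (T i j) = (\<Sum>k\<in>{1..n}. Poly_Mapping.single ([T i k], [T k j]) 1)"
  by (simp add: cop_gen_def gn_as_word tens_word)

lemma cop_gen_T_out_of_range: "\<not> (i \<in> {1..n} \<and> j \<in> {1..n}) \<Longrightarrow> cop_gen n (T i j) = 0"
  unfolding cop_gen_def by (simp only: gen.case if_False)

lemma cop_gen_G: "cop_gen n G = Poly_Mapping.single ([G], [G]) 1"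
  by (simp add: cop_gen_def gn_as_word tens_word)

lemma sum_swap_4:
  "(\<Sum>a\<in>A. \<Sum>b\<in>B. \<Sum>c\<in>C. \<Sum>d\<in>D. F a b c d) = (\<Sum>c\<in>C. \<Sum>d\<in>D. \<Sum>a\<in>A. \<Sum>b\<in>B. F a b c d)"
proof -
  have "(\<Sum>a\<in>A. \<Sum>b\<in>B. \<Sum>c\<in>C. \<Sum>d\<in>D. F a b c d) = (\<Sum>a\<in>A. \<Sum>c\<in>C. \<Sum>b\<in>B. \<Sum>d\<in>D. F a b c d)"
    by (rule sum.cong[OF refl], rule sum.swap)
  also have "\<dots> = (\<Sum>c\<in>C. \<Sum>a\<in>A. \<Sum>d\<in>D. \<Sum>b\<in>B. F a b c d)"
    by (subst sum.swap) (rule sum.cong[OF refl], rule sum.cong[OF refl], rule sum.swap)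
  also have "\<dots> = (\<Sum>c\<in>C. \<Sum>d\<in>D. \<Sum>a\<in>A. \<Sum>b\<in>B. F a b c d)"
    by (rule sum.cong[OF refl], rule sum.swap)
  finally show ?thesis .
qed

lemma sum_swap_4':
  "(\<Sum>a\<in>A. \<Sum>b\<in>B. \<Sum>c\<in>C. \<Sum>d\<in>D. F a b c d) = (\<Sum>d\<in>D. \<Sum>c\<in>C. \<Sum>a\<in>A. \<Sum>b\<in>B. F a b c d)"
  by (subst sum_swap_4) (rule sum.swap)

text \<open>After expanding both sides, the two mixed sums \<open>B2\<close> and \<open>C1\<close> coincide up to renaming of
  indices, and the Koszul signs of the graded product are exactly the signs of the super relation.\<close>

lemma scop_superFRT_rel:
  assumes "a \<in> {1..n}" "b \<in> {1..n}" "c \<in> {1..n}" "d \<in> {1..n}"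
  shows "scop n q (superFRT_rel n q Rx a b c d) =
     (\<Sum>k\<in>{1..n}. \<Sum>l\<in>{1..n}. scal (sgn (q k * q l + q c * q l))
        (tens (superFRT_rel n q Rx a b k l) (word [T k c, T l d])))
   + (\<Sum>k\<in>{1..n}. \<Sum>l\<in>{1..n}. scal (sgn (q k * q a + q k * q l))
        (tens (word [T b k, T a l]) (superFRT_rel n q Rx l k c d)))"
proof -
  let ?Q = "{1..n}"
  define A1 where "A1 = (\<Sum>f\<in>?Q. \<Sum>e\<in>?Q. \<Sum>l\<in>?Q. \<Sum>k\<in>?Q.
     Poly_Mapping.single ([T f k, T e l], [T k c, T l d])
      ((sgn (q a * q b + q c * q e) * Rx a f b e * sgn (deg_word q [T k c] * deg_word q [T e l])) :: 'a))"
  define A2 where "A2 = (\<Sum>r\<in>?Q. \<Sum>s\<in>?Q. \<Sum>l\<in>?Q. \<Sum>k\<in>?Q.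
     Poly_Mapping.single ([T b k, T a l], [T k r, T l s])
      ((sgn (q c * q d + q r * q a) * Rx s c r d * sgn (deg_word q [T k r] * deg_word q [T a l])) :: 'a))"
  define B1 where "B1 = (\<Sum>k\<in>?Q. \<Sum>l\<in>?Q. \<Sum>f\<in>?Q. \<Sum>e\<in>?Q.
     Poly_Mapping.single ([T f k, T e l], [T k c, T l d])
      ((sgn (q k * q l + q c * q l) * (sgn (q a * q b + q k * q e) * Rx a f b e)) :: 'a))"
  define B2 where "B2 = (\<Sum>k\<in>?Q. \<Sum>l\<in>?Q. \<Sum>r\<in>?Q. \<Sum>s\<in>?Q.
     Poly_Mapping.single ([T b r, T a s], [T k c, T l d])
      ((sgn (q k * q l + q c * q l) * (sgn (q k * q l + q r * q a) * Rx s k r l)) :: 'a))"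
  define C1 where "C1 = (\<Sum>k\<in>?Q. \<Sum>l\<in>?Q. \<Sum>f\<in>?Q. \<Sum>e\<in>?Q.
     Poly_Mapping.single ([T b k, T a l], [T f c, T e d])
      ((sgn (q k * q a + q k * q l) * (sgn (q l * q k + q c * q e) * Rx l f k e)) :: 'a))"
  define C2 where "C2 = (\<Sum>k\<in>?Q. \<Sum>l\<in>?Q. \<Sum>r\<in>?Q. \<Sum>s\<in>?Q.
     Poly_Mapping.single ([T b k, T a l], [T k r, T l s])
      ((sgn (q k * q a + q k * q l) * (sgn (q c * q d + q r * q l) * Rx s c r d)) :: 'a))"
  have lhs: "scop n q (superFRT_rel n q Rx a b c d) = A1 - A2"
    using assms unfolding A1_def A2_def
    by (simp add: superFRT_rel_def scop_diff scop_sum scop_scal scop_word cop_gen_T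
        stmul_sum_left stmul_sum_right stmul_single scal_sum_right)
  have rhs: "(\<Sum>k\<in>?Q. \<Sum>l\<in>?Q. scal (sgn (q k * q l + q c * q l))
        (tens (superFRT_rel n q Rx a b k l) (word [T k c, T l d])))
   + (\<Sum>k\<in>?Q. \<Sum>l\<in>?Q. scal (sgn (q k * q a + q k * q l))
        (tens (word [T b k, T a l]) (superFRT_rel n q Rx l k c d)))
   = (B1 - B2) + (C1 - C2)"
    unfolding B1_def B2_def C1_def C2_def
    by (simp add: superFRT_rel_def tens_diff_left tens_diff_right tens_sum_left tens_sum_right
        tens_scal_left tens_scal_right tens_word scal_diff_right scal_sum_right sum_subtractf)
  have c1: "(sgn (q a * q b + q c * q e) * Rx a f b e * sgn (deg_word q [T k c] * deg_word q [T e l]) :: 'a)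
      = sgn (q k * q l + q c * q l) * (sgn (q a * q b + q k * q e) * Rx a f b e)" for f e k l
    by (rule sgn_mult_commute_parity) (auto simp: deg_word_T even_add even_mult_iff)
  have c2: "(sgn (q c * q d + q r * q a) * Rx s c r d * sgn (deg_word q [T k r] * deg_word q [T a l]) :: 'a)
      = sgn (q k * q a + q k * q l) * (sgn (q c * q d + q r * q l) * Rx s c r d)" for r s k l
    by (rule sgn_mult_commute_parity) (auto simp: deg_word_T even_add even_mult_iff)
  have c3: "(sgn (q k * q l + q c * q l) * (sgn (q k * q l + q r * q a) * Rx s k r l) :: 'a)
      = sgn (q r * q a + q r * q s) * (sgn (q s * q r + q c * q l) * Rx s k r l)" for r s k l
    by (rule sgn_mult_assoc_parity) (auto simp: even_add even_mult_iff)
  have "A1 = B1"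
    unfolding A1_def B1_def c1 by (rule sum_swap_4')
  moreover have "A2 = C2"
    unfolding A2_def C2_def c2 by (rule sum_swap_4')
  moreover have "B2 = C1"
    unfolding B2_def C1_def c3 by (rule sum_swap_4)
  ultimately show ?thesis using lhs rhs by simp
qed

lemma counit_superFRT_rel:
  assumes "a \<in> {1..n}" "b \<in> {1..n}" "c \<in> {1..n}" "d \<in> {1..n}"
  shows "counit n (superFRT_rel n q Rx a b c d) = 0"
proof -
  have "counit n (superFRT_rel n q Rx a b c d) =
      sgn (q a * q b + q c * q d) * Rx a c b d - sgn (q c * q d + q b * q a) * Rx a c b d"
    using assms
    by (simp add: superFRT_rel_def counit_diff counit_sum counit_scal counit_word counit_gen_def
        if_distrib[of "\<lambda>x. _ * x"] sum.delta sum.delta' cong: if_cong)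
  then show ?thesis by (simp add: mult.commute add.commute)
qed

definition commute_rel :: "(nat \<Rightarrow> nat) \<Rightarrow> nat \<Rightarrow> nat \<Rightarrow> 'k::field fa" where
  "commute_rel p i j = word [G, T i j] - scal (sgn (p i + p j)) (word [T i j, G])"

lemma Z2_relsE:
  assumes "r \<in> Z2_rels n p"
  obtains "r = word [G, G] - word []"
  | i j where "\<not> (i \<in> {1..n} \<and> j \<in> {1..n})" "r = word [T i j]"
  | i j where "i \<in> {1..n}" "j \<in> {1..n}" "r = commute_rel p i j"
  using assms unfolding Z2_rels_def by (auto simp: commute_rel_def fone_def gn_as_word)

lemma commute_rel_in_Z2_rels: "i \<in> {1..n} \<Longrightarrow> j \<in> {1..n} \<Longrightarrow> commute_rel p i j \<in> Z2_rels n p"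
  unfolding Z2_rels_def commute_rel_def by auto

lemma G_square_rel_in_Z2_rels: "word [G, G] - word [] \<in> Z2_rels n p"
  unfolding Z2_rels_def by (auto simp: fone_def)

lemma T_out_of_range_in_Z2_rels: "\<not> (i \<in> {1..n} \<and> j \<in> {1..n}) \<Longrightarrow> word [T i j] \<in> Z2_rels n p"
  unfolding Z2_rels_def by (auto simp: gn_as_word)

lemma scop_commute_rel:
  assumes "i \<in> {1..n}" "j \<in> {1..n}"
  shows "scop n q (commute_rel p i j) = (\<Sum>k\<in>{1..n}. tens (commute_rel p i k) (word [G, T k j]))
     + (\<Sum>k\<in>{1..n}. scal (sgn (p i + p k)) (tens (word [T i k, G]) (commute_rel p k j)))"
proof -
  have "scop n q (commute_rel p i j) = (\<Sum>k\<in>{1..n}. Poly_Mapping.single ([G, T i k], [G, T k j]) 1)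
     - (\<Sum>k\<in>{1..n}. Poly_Mapping.single ([T i k, G], [T k j, G]) (sgn (p i + p j)))"
    using assms
    by (simp add: commute_rel_def scop_diff scop_scal scop_word cop_gen_G cop_gen_T
        stmul_sum_left stmul_sum_right stmul_single scal_sum_right)
  also have "\<dots> = (\<Sum>k\<in>{1..n}. Poly_Mapping.single ([G, T i k], [G, T k j]) 1
        - Poly_Mapping.single ([T i k, G], [G, T k j]) (sgn (p i + p k)))
     + (\<Sum>k\<in>{1..n}. Poly_Mapping.single ([T i k, G], [G, T k j]) (sgn (p i + p k))
        - Poly_Mapping.single ([T i k, G], [T k j, G]) (sgn (p i + p k) * sgn (p k + p j)))"
    by (simp add: sgn_add_chain sum_subtractf)
  also have "\<dots> = (\<Sum>k\<in>{1..n}. tens (commute_rel p i k) (word [G, T k j]))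
     + (\<Sum>k\<in>{1..n}. scal (sgn (p i + p k)) (tens (word [T i k, G]) (commute_rel p k j)))"
    by (simp add: commute_rel_def tens_diff_left tens_diff_right tens_scal_left tens_scal_right
        tens_word scal_diff_right)
  finally show ?thesis .
qed

lemma counit_commute_rel: "counit n (commute_rel p i j) = 0"
  by (auto simp: commute_rel_def counit_diff counit_scal counit_word counit_gen_def sgn_def)

text \<open>For \<open>q = 0\<close> these are the relations of the \<open>\<int>\<^sub>2\<close>-extension of \<open>A(R)\<close>, for \<open>q = p\<close> those of
  the super FRT algebra; treating both at once gives both bialgebra statements.\<close>

definition FRT_Z2_rels :: "nat \<Rightarrow> (nat \<Rightarrow> nat) \<Rightarrow> (nat \<Rightarrow> nat) \<Rightarrow> (nat \<Rightarrow> nat \<Rightarrow> nat \<Rightarrow> nat \<Rightarrow> 'k::field)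
    \<Rightarrow> 'k fa set" where
  "FRT_Z2_rels n q p Rx = {superFRT_rel n q Rx a b c d | a b c d.
       a \<in> {1..n} \<and> b \<in> {1..n} \<and> c \<in> {1..n} \<and> d \<in> {1..n}} \<union> Z2_rels n p"

lemma superFRT_rel_trivial_grading: "superFRT_rel n (\<lambda>_. 0) R a b c d = FRT_rel n R a b c d"
  by (simp add: superFRT_rel_def FRT_rel_def)

lemma AR_Z2_rels_eq_FRT_Z2_rels: "AR_Z2_rels n p R = FRT_Z2_rels n (\<lambda>_. 0) p R"
  by (simp add: AR_Z2_rels_def FRT_Z2_rels_def superFRT_rel_trivial_grading)

lemma superAR_Z2_rels_eq_FRT_Z2_rels: "superAR_Z2_rels n p Rx = FRT_Z2_rels n p p Rx"
  by (simp add: superAR_Z2_rels_def FRT_Z2_rels_def)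

lemma FRT_Z2_relsE:
  assumes "r \<in> FRT_Z2_rels n q p Rx"
  obtains a b c d where "a \<in> {1..n}" "b \<in> {1..n}" "c \<in> {1..n}" "d \<in> {1..n}"
      "r = superFRT_rel n q Rx a b c d"
  | "r \<in> Z2_rels n p"
  using assms unfolding FRT_Z2_rels_def by blast

lemma scop_counit_Z2_rel:
  assumes r: "r \<in> Z2_rels n p" and sub: "Z2_rels n p \<subseteq> S"
  shows "scop n q r \<in> tens_ideal (ideal_gen S) \<and> counit n r = 0"
proof -
  have Z2_in: "x \<in> ideal_gen S" if "x \<in> Z2_rels n p" for x
    using that sub by (intro ideal_gen_generator) auto
  from r show ?thesis
  proof (cases rule: Z2_relsE)
    case 1
    have "scop n q r = tens (word [G, G] - word []) (word [G, G]) + tens (word []) (word [G, G] - word [])"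
      by (simp add: 1 scop_diff scop_word cop_gen_G stmul_single tens_one_def tens_diff_left
          tens_diff_right tens_word)
    then show ?thesis using Z2_in[OF G_square_rel_in_Z2_rels]
      by (simp add: 1 tens_ideal.add tens_ideal.left tens_ideal.right counit_diff counit_word
          counit_gen_def)
  next
    case (2 i j)
    then show ?thesis
      by (auto simp: scop_word cop_gen_T_out_of_range counit_word counit_gen_def tens_ideal.zero)
  next
    case (3 i j)
    have "scop n q r \<in> tens_ideal (ideal_gen S)"
      unfolding 3 scop_commute_rel[OF 3(1,2)]
      by (intro tens_ideal.add tens_ideal_sum tens_ideal_scal tens_ideal.left tens_ideal.right
          Z2_in commute_rel_in_Z2_rels) (use 3 in auto)
    then show ?thesis by (simp add: 3 counit_commute_rel)
  qed
qed

lemma scop_counit_FRT_Z2_rel: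
  assumes r: "r \<in> FRT_Z2_rels n q p Rx"
  shows "scop n q r \<in> tens_ideal (ideal_gen (FRT_Z2_rels n q p Rx)) \<and> counit n r = 0"
  using r
proof (cases rule: FRT_Z2_relsE)
  case (1 a b c d)
  have FRT_in: "superFRT_rel n q Rx k l c' d' \<in> ideal_gen (FRT_Z2_rels n q p Rx)"
    if "k \<in> {1..n}" "l \<in> {1..n}" "c' \<in> {1..n}" "d' \<in> {1..n}" for k l c' d'
    using that by (intro ideal_gen_generator) (auto simp: FRT_Z2_rels_def)
  have "scop n q r \<in> tens_ideal (ideal_gen (FRT_Z2_rels n q p Rx))"
    unfolding 1(5) scop_superFRT_rel[OF 1(1-4)]
    by (intro tens_ideal.add tens_ideal_sum tens_ideal_scal tens_ideal.left tens_ideal.right FRT_in)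
       (use 1 in auto)
  then show ?thesis using counit_superFRT_rel[OF 1(1-4)] 1(5) by simp
next
  case 2
  then show ?thesis by (rule scop_counit_Z2_rel) (auto simp: FRT_Z2_rels_def)
qed

lemma FRT_Z2_biideal:
  assumes twist: "twist_closed q (ideal_gen (FRT_Z2_rels n q p Rx))"
    and x: "x \<in> ideal_gen (FRT_Z2_rels n q p Rx)"
  shows "scop n q x \<in> tens_ideal (ideal_gen (FRT_Z2_rels n q p Rx)) \<and> counit n x = 0"
  using x
proof (induction rule: ideal_gen.induct)
  case (gen r a b)
  have r: "scop n q r \<in> tens_ideal (ideal_gen (FRT_Z2_rels n q p Rx)) \<and> counit n r = 0"
    by (rule scop_counit_FRT_Z2_rel[OF gen])
  have "scop n q (fmul (fmul a r) b) = stmul q (stmul q (scop n q a) (scop n q r)) (scop n q b)"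
    by (simp add: scop_fmul)
  also have "\<dots> \<in> tens_ideal (ideal_gen (FRT_Z2_rels n q p Rx))"
    using r twist by (intro tens_ideal_stmul_left tens_ideal_stmul_right) auto
  finally show ?case using r by (simp add: counit_fmul)
qed (simp_all add: scop_add counit_add tens_ideal.zero tens_ideal.add)

lemma AR_Z2_bialgebra: "is_bialgebra_presented n (ideal_gen (AR_Z2_rels n p R))"
  unfolding is_bialgebra_presented_def cop_eq_scop_trivial_grading AR_Z2_rels_eq_FRT_Z2_rels
  using FRT_Z2_biideal[OF twist_closed_trivial_grading] by blast

lemma homogeneous_iff:
  "homogeneous q e x \<longleftrightarrow> (\<forall>w. deg_word q w \<noteq> e \<longrightarrow> Poly_Mapping.lookup x w = 0)"
  by (auto simp: homogeneous_def in_keys_iff)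

lemma homogeneous_word: "deg_word q w = e \<Longrightarrow> homogeneous q e (word w)"
  by (auto simp: homogeneous_iff word_as_single lookup_single when_def)

lemma homogeneous_diff: "homogeneous q e x \<Longrightarrow> homogeneous q e y \<Longrightarrow> homogeneous q e (x - y)"
  by (auto simp: homogeneous_iff lookup_minus)

lemma homogeneous_scal: "homogeneous q e x \<Longrightarrow> homogeneous q e (scal c x)"
  by (auto simp: homogeneous_iff)

lemma homogeneous_zero: "homogeneous q e 0"
  by (auto simp: homogeneous_iff)

lemma homogeneous_sum: "(\<And>i. i \<in> A \<Longrightarrow> homogeneous q e (f i)) \<Longrightarrow> homogeneous q e (sum f A)"
  by (auto simp: homogeneous_iff lookup_sum intro!: sum.neutral)

lemma superizable_parity:
  assumes "superizable n p R" "a \<in> {1..n}" "b \<in> {1..n}" "c \<in> {1..n}" "d \<in> {1..n}" "R a c b d \<noteq> 0"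
  shows "even (p a + p b) = even (p c + p d)"
proof -
  have "\<not> odd (p a + p b + p c + p d)"
    using assms unfolding superizable_def by blast
  then show ?thesis by (auto simp: even_add)
qed

lemma homogeneous_superFRT_rel:
  assumes sup: "superizable n p R" and abcd: "a \<in> {1..n}" "b \<in> {1..n}" "c \<in> {1..n}" "d \<in> {1..n}"
  shows "homogeneous p ((p a + p b + p c + p d) mod 2) (superFRT_rel n p (Rsuper p R) a b c d)"
  unfolding superFRT_rel_def fmul_gn
proof (intro homogeneous_diff homogeneous_sum)
  fix f e assume fe: "f \<in> {1..n}" "e \<in> {1..n}"
  show "homogeneous p ((p a + p b + p c + p d) mod 2)
      (scal (sgn (p a * p b + p c * p e) * Rsuper p R a f b e) (word [T f c, T e d]))"
  proof (cases "R a f b e = 0")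
    case False
    then have "deg_word p [T f c, T e d] = (p a + p b + p c + p d) mod 2"
      using superizable_parity[OF sup abcd(1,2) fe] by (auto simp: deg_word_TT even_add mod2_eq_if)
    then show ?thesis by (intro homogeneous_scal homogeneous_word)
  qed (simp add: Rsuper_def homogeneous_zero)
next
  fix r s assume rs: "r \<in> {1..n}" "s \<in> {1..n}"
  show "homogeneous p ((p a + p b + p c + p d) mod 2)
      (scal (sgn (p c * p d + p r * p a) * Rsuper p R s c r d) (word [T b r, T a s]))"
  proof (cases "R s c r d = 0")
    case False
    then have "deg_word p [T b r, T a s] = (p a + p b + p c + p d) mod 2"
      using superizable_parity[OF sup rs(2,1) abcd(3,4)] by (auto simp: deg_word_TT even_add mod2_eq_if)
    then show ?thesis by (intro homogeneous_scal homogeneous_word)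
  qed (simp add: Rsuper_def homogeneous_zero)
qed

lemma homogeneous_Z2_rel: "r \<in> Z2_rels n p \<Longrightarrow> \<exists>e. homogeneous p e r"
proof (erule Z2_relsE)
  assume "r = word [G, G] - word []"
  then show ?thesis by (auto intro!: homogeneous_diff homogeneous_word)
next
  fix i j assume "r = word [T i j]"
  then show ?thesis using homogeneous_word by blast
next
  fix i j assume r: "r = commute_rel p i j"
  have "homogeneous p ((p i + p j) mod 2) r"
    unfolding r commute_rel_def
    by (intro homogeneous_diff homogeneous_scal homogeneous_word) (simp_all add: deg_word_def)
  then show ?thesis by blast
qed

lemma twist_closed_superAR_Z2:
  assumes "superizable n p R"
  shows "twist_closed p (ideal_gen (superAR_Z2_rels n p (Rsuper p R)))"
proof (rule twist_closed_ideal_gen, intro ballI)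
  fix r assume "r \<in> superAR_Z2_rels n p (Rsuper p R)"
  then show "\<exists>e. homogeneous p e r"
    unfolding superAR_Z2_rels_eq_FRT_Z2_rels
    by (cases rule: FRT_Z2_relsE) (use homogeneous_superFRT_rel[OF assms] homogeneous_Z2_rel in blast)+
qed

lemma superAR_Z2_super_bialgebra:
  assumes "superizable n p R"
  shows "is_super_bialgebra_presented n p (ideal_gen (superAR_Z2_rels n p (Rsuper p R)))"
  using FRT_Z2_biideal twist_closed_superAR_Z2[OF assms]
  unfolding is_super_bialgebra_presented_def superAR_Z2_rels_eq_FRT_Z2_rels by blast

section \<open>Commuting \<open>g\<close> modulo the \<open>\<int>\<^sub>2\<close>-relations\<close>

locale Z2_ideal =
  fixes n :: nat and p :: "nat \<Rightarrow> nat" and S :: "'k::field fa set"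
  assumes Z2_rels_subset: "Z2_rels n p \<subseteq> S"
begin

abbreviation K where "K \<equiv> ideal_gen S"

lemma Z2_rel_in_ideal: "x \<in> Z2_rels n p \<Longrightarrow> x \<in> K"
  using Z2_rels_subset by (intro ideal_gen_generator) auto

lemma in_ideal_context: "x \<in> K \<Longrightarrow> fmul (fmul (word A) x) (word B) \<in> K"
  by (intro ideal_gen_fmul_left ideal_gen_fmul_right)

lemma word_T_out_of_range_in_ideal: "\<not> (i \<in> {1..n} \<and> j \<in> {1..n}) \<Longrightarrow> word (A @ T i j # B) \<in> K"
  using in_ideal_context[OF Z2_rel_in_ideal[OF T_out_of_range_in_Z2_rels], of i j A B] by simp

lemma G_square_cancel: "word (A @ G # G # B) - word (A @ B) \<in> K"
  using in_ideal_context[OF Z2_rel_in_ideal[OF G_square_rel_in_Z2_rels], of A B]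
  by (simp add: fmul_diff_left fmul_diff_right)

lemma G_commute_T:
  "i \<in> {1..n} \<Longrightarrow> j \<in> {1..n} \<Longrightarrow>
   word (A @ G # T i j # B) - scal (sgn (p i + p j)) (word (A @ T i j # G # B)) \<in> K"
  using in_ideal_context[OF Z2_rel_in_ideal[OF commute_rel_in_Z2_rels], of i j A B]
  by (simp add: commute_rel_def fmul_diff_left fmul_diff_right fmul_scal_left fmul_scal_right)

lemma G_commute_word: "word (A @ G # B) - scal (sgn (deg_word p B)) (word (A @ B @ [G])) \<in> K"
proof (induction B arbitrary: A)
  case Nil then show ?case by (simp add: ideal_gen.zero)
next
  case (Cons x B)
  show ?case
  proof (cases x)
    case G
    from Cons[of "A @ [G]"] show ?thesis by (simp add: G)
  next
    case (T i j)
    show ?thesis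
    proof (cases "i \<in> {1..n} \<and> j \<in> {1..n}")
      case True
      have "word (A @ G # T i j # B) - scal (sgn (p i + p j)) (word (A @ T i j # G # B)) \<in> K"
        using True by (intro G_commute_T) auto
      moreover have "word (A @ T i j # G # B) - scal (sgn (deg_word p B)) (word (A @ T i j # B @ [G])) \<in> K"
        using Cons[of "A @ [T i j]"] by simp
      moreover have "(sgn (p i + p j) * sgn (deg_word p B) :: 'k) = sgn (deg_word p (T i j # B))"
        by (simp add: sgn_add[symmetric] deg_word_Cons) (rule sgn_cong_parity, simp)
      ultimately show ?thesis using ideal_gen_diff_trans by (fastforce simp: T)
    next
      case False
      then show ?thesis
        using word_T_out_of_range_in_ideal[of i j "A @ [G]" B] word_T_out_of_range_in_ideal[of i j A "B @ [G]"]
        by (simp add: T ideal_gen_diff ideal_gen_scal)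
    qed
  qed
qed

lemma G_power_commute_word:
  "word (A @ replicate m G @ B) - scal (sgn (m * deg_word p B)) (word (A @ B @ replicate m G)) \<in> K"
proof (induction m arbitrary: A)
  case 0 then show ?case by (simp add: ideal_gen.zero)
next
  case (Suc m)
  have "word ((A @ [G]) @ replicate m G @ B)
      - scal (sgn (m * deg_word p B)) (word ((A @ [G]) @ B @ replicate m G)) \<in> K"
    by (rule Suc)
  moreover have "word (A @ G # (B @ replicate m G))
      - scal (sgn (deg_word p B)) (word (A @ (B @ replicate m G) @ [G])) \<in> K"
    using G_commute_word[of A "B @ replicate m G"] by (simp add: deg_word_append deg_word_less_2)
  moreover have "(sgn (m * deg_word p B) * sgn (deg_word p B) :: 'k) = sgn (Suc m * deg_word p B)"
    by (simp add: sgn_add[symmetric] add.commute)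
  ultimately show ?case
    using ideal_gen_diff_trans by (fastforce simp: replicate_append_same)
qed

lemma G_power_mod_2: "word (A @ replicate m G @ B) - word (A @ replicate (m mod 2) G @ B) \<in> K"
proof (induction m rule: less_induct)
  case (less m)
  show ?case
  proof (cases "m < 2")
    case False
    then obtain k where m: "m = Suc (Suc k)" by (metis add_2_eq_Suc le_add_diff_inverse not_less)
    have "word (A @ replicate m G @ B) - word (A @ replicate k G @ B) \<in> K"
      using G_square_cancel[of A "replicate k G @ B"] by (simp add: m)
    moreover have "word (A @ replicate k G @ B) - word (A @ replicate (k mod 2) G @ B) \<in> K"
      using less m by simp
    ultimately show ?thesis using ideal_gen.add m by fastforce
  qed (simp add: ideal_gen.zero)
qed

lemma G_power_parity:
  assumes "even a = even b"
  shows "word (A @ replicate a G @ B) - word (A @ replicate b G @ B) \<in> K"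
proof -
  have "a mod 2 = b mod 2"
    using assms by (metis even_iff_mod_2_eq_zero odd_iff_mod_2_eq_one)
  then show ?thesis
    using G_power_mod_2[of A a B] G_power_mod_2[of A b B] ideal_gen_diff by fastforce
qed

end

lemma Z2_ideal_FRT_Z2_rels: "Z2_ideal n p (FRT_Z2_rels n q p Rx)"
  by unfold_locales (auto simp: FRT_Z2_rels_def)

section \<open>The isomorphism \<open>\<phi>\<close>\<close>

fun phi_letter :: "(nat \<Rightarrow> nat) \<Rightarrow> gen \<Rightarrow> gen list" where
  "phi_letter p (T i j) = T i j # replicate (p j) G"
| "phi_letter p G = [G]"

definition phi_word :: "(nat \<Rightarrow> nat) \<Rightarrow> gen list \<Rightarrow> gen list" where
  "phi_word p w = concat (map (phi_letter p) w)"

definition phi_gen :: "(nat \<Rightarrow> nat) \<Rightarrow> gen \<Rightarrow> 'k::field fa" where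
  "phi_gen p x = word (phi_letter p x)"

lemma phi_word_Nil [simp]: "phi_word p [] = []"
  by (simp add: phi_word_def)

lemma phi_word_Cons [simp]: "phi_word p (x # w) = phi_letter p x @ phi_word p w"
  by (simp add: phi_word_def)

lemma phi_word_append [simp]: "phi_word p (u @ v) = phi_word p u @ phi_word p v"
  by (simp add: phi_word_def)

lemma phi_word_replicate_G [simp]: "phi_word p (replicate m G) = replicate m G"
  by (induction m) auto

lemma deg_word_phi_word [simp]: "deg_word q (phi_word q w) = deg_word q w"
proof (induction w)
  case (Cons x w)
  then show ?case
    by (cases x) (simp_all add: deg_word_append deg_word_Cons mod_add_right_eq)
qed simp

lemma alg_ext_phi_gen_word: "alg_ext (phi_gen p) (word w) = word (phi_word p w)"
  by (induction w) (simp_all add: alg_ext_word phi_gen_def fone_def)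

lemma alg_ext_phi_gen_as_lin_ext: "alg_ext (phi_gen p) = lin_ext (\<lambda>w. word (phi_word p w))"
  by (rule ext, simp add: alg_ext_as_lin_ext, rule lin_ext_cong)
     (simp add: alg_ext_word[symmetric] alg_ext_phi_gen_word)

lemma counit_alg_ext_phi_gen:
  fixes x :: "'k::field fa"
  shows "counit n (alg_ext (phi_gen p) x) = counit n x"
proof (induction x rule: poly_mapping_induct)
  case (single w c)
  have G_power: "prod_list (map (counit_gen n) (replicate m G)) = 1" for m
    by (induction m) (simp_all add: counit_gen_def)
  have "counit n (word (phi_word p w) :: 'k fa) = counit n (word w)"
  proof (induction w)
    case (Cons x w)
    then show ?case by (cases x) (simp_all add: counit_word G_power counit_gen_def)
  qed simp
  moreover have "Poly_Mapping.single w c = scal c (word w)"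
    by (simp add: word_as_single)
  ultimately show ?case
    by (simp add: alg_ext_scal counit_scal alg_ext_phi_gen_word)
qed (simp_all add: alg_ext_as_lin_ext lin_ext_add counit_add)

lemma sgn_mult3_parity:
  assumes "even (x + y + z) = even w"
  shows "(sgn x :: 'k::field) * (sgn y * (sgn z * c)) = c * sgn w"
proof -
  have "(sgn x :: 'k) * (sgn y * (sgn z * c)) = sgn (x + y + z) * c"
    by (simp add: sgn_add)
  then show ?thesis
    by (simp add: sgn_cong_parity[OF assms] mult.commute)
qed

lemma sgn_mult3_parity':
  "even (x + y + z) = even w \<Longrightarrow> (sgn x :: 'k::field) * (sgn y * c) * sgn z = sgn w * c"
  using sgn_mult3_parity[of x y z w c] by (simp add: mult_ac)

context Z2_ideal
begin

lemma alg_ext_phi_gen_TT: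
  "alg_ext (phi_gen p) (word [T f c, T e d])
   - scal (sgn (p c * (p e + p d))) (word ([T f c, T e d] @ replicate (p c + p d) G)) \<in> K"
proof -
  have "word ([T f c] @ replicate (p c) G @ (T e d # replicate (p d) G))
     - scal (sgn (p c * deg_word p (T e d # replicate (p d) G)))
         (word ([T f c] @ (T e d # replicate (p d) G) @ replicate (p c) G)) \<in> K"
    by (rule G_power_commute_word)
  moreover have "(sgn (p c * deg_word p (T e d # replicate (p d) G)) :: 'k) = sgn (p c * (p e + p d))"
    by (rule sgn_cong_parity) (simp add: deg_word_Cons even_mult_iff)
  moreover have "[T f c] @ (T e d # replicate (p d) G) @ replicate (p c) G
      = [T f c, T e d] @ replicate (p c + p d) G"
    by (simp add: replicate_add[symmetric] add.commute)
  ultimately show ?thesis by (simp add: alg_ext_phi_gen_word)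
qed

text \<open>The hypothesis on \<open>\<beta>\<close> lets every term end in the same power \<open>g\<^sup>p\<^sup>c\<^sup>+\<^sup>p\<^sup>d\<close>.\<close>

lemma alg_ext_phi_gen_quadratic:
  assumes hb: "\<And>r s. r \<in> {1..n} \<Longrightarrow> s \<in> {1..n} \<Longrightarrow> \<beta> r s \<noteq> 0 \<Longrightarrow> even (p r + p s) = even (p c + p d)"
  shows "alg_ext (phi_gen p) ((\<Sum>f\<in>{1..n}. \<Sum>e\<in>{1..n}. scal (\<alpha> f e) (word [T f c, T e d]))
        - (\<Sum>r\<in>{1..n}. \<Sum>s\<in>{1..n}. scal (\<beta> r s) (word [T b r, T a s])))
   - fmul ((\<Sum>f\<in>{1..n}. \<Sum>e\<in>{1..n}. scal (\<alpha> f e * sgn (p c * (p e + p d))) (word [T f c, T e d]))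
        - (\<Sum>r\<in>{1..n}. \<Sum>s\<in>{1..n}. scal (\<beta> r s * sgn (p r * (p a + p s))) (word [T b r, T a s])))
      (word (replicate (p c + p d) G)) \<in> K"
proof -
  let ?G = "word (replicate (p c + p d) G) :: 'k fa"
  have eq: "alg_ext (phi_gen p) ((\<Sum>f\<in>{1..n}. \<Sum>e\<in>{1..n}. scal (\<alpha> f e) (word [T f c, T e d]))
        - (\<Sum>r\<in>{1..n}. \<Sum>s\<in>{1..n}. scal (\<beta> r s) (word [T b r, T a s])))
   - fmul ((\<Sum>f\<in>{1..n}. \<Sum>e\<in>{1..n}. scal (\<alpha> f e * sgn (p c * (p e + p d))) (word [T f c, T e d]))
        - (\<Sum>r\<in>{1..n}. \<Sum>s\<in>{1..n}. scal (\<beta> r s * sgn (p r * (p a + p s))) (word [T b r, T a s]))) ?G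
   = (\<Sum>f\<in>{1..n}. \<Sum>e\<in>{1..n}. scal (\<alpha> f e) (alg_ext (phi_gen p) (word [T f c, T e d])
          - scal (sgn (p c * (p e + p d))) (fmul (word [T f c, T e d]) ?G)))
     - (\<Sum>r\<in>{1..n}. \<Sum>s\<in>{1..n}. scal (\<beta> r s) (alg_ext (phi_gen p) (word [T b r, T a s])
          - scal (sgn (p r * (p a + p s))) (fmul (word [T b r, T a s]) ?G)))"
    by (simp only: alg_ext_diff alg_ext_sum alg_ext_scal fmul_diff_left fmul_sum_left fmul_scal_left
        scal_diff_right scal_scal sum_subtractf diff_diff_eq diff_add_eq add_diff_eq)
       (simp add: algebra_simps)
  have alpha: "scal (\<alpha> f e) (alg_ext (phi_gen p) (word [T f c, T e d])
      - scal (sgn (p c * (p e + p d))) (fmul (word [T f c, T e d]) ?G)) \<in> K" for f e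
    using alg_ext_phi_gen_TT[of f c e d] by (intro ideal_gen_scal) simp
  have beta: "scal (\<beta> r s) (alg_ext (phi_gen p) (word [T b r, T a s])
      - scal (sgn (p r * (p a + p s))) (fmul (word [T b r, T a s]) ?G)) \<in> K"
    if rs: "r \<in> {1..n}" "s \<in> {1..n}" for r s
  proof (cases "\<beta> r s = 0")
    case False
    have "alg_ext (phi_gen p) (word [T b r, T a s])
        - scal (sgn (p r * (p a + p s))) (word ([T b r, T a s] @ replicate (p r + p s) G)) \<in> K"
      by (rule alg_ext_phi_gen_TT)
    moreover have "word ([T b r, T a s] @ replicate (p r + p s) G)
        - scal 1 (word ([T b r, T a s] @ replicate (p c + p d) G)) \<in> K"
      using G_power_parity[of "p r + p s" "p c + p d" "[T b r, T a s]" "[]"] hb[OF rs False] by simp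
    ultimately have "alg_ext (phi_gen p) (word [T b r, T a s])
        - scal (sgn (p r * (p a + p s)) * 1) (word ([T b r, T a s] @ replicate (p c + p d) G)) \<in> K"
      by (rule ideal_gen_diff_trans)
    then show ?thesis by (intro ideal_gen_scal) simp
  qed (simp add: ideal_gen.zero)
  show ?thesis
    unfolding eq by (intro ideal_gen_diff ideal_gen_sum alpha beta) auto
qed

lemma alg_ext_phi_gen_FRT_rel:
  assumes abcd: "a \<in> {1..n}" "b \<in> {1..n}" "c \<in> {1..n}" "d \<in> {1..n}"
    and sup: "superizable n p R"
    and super_rel: "superFRT_rel n p (Rsuper p R) a b c d \<in> K"
  shows "alg_ext (phi_gen p) (FRT_rel n R a b c d) \<in> K"
proof -
  have hb: "even (p r + p s) = even (p c + p d)"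
    if "r \<in> {1..n}" "s \<in> {1..n}" "R s c r d \<noteq> 0" for r s
    using superizable_parity[OF sup that(2,1) abcd(3,4) that(3)] by (simp add: add.commute)
  have signs: "(\<Sum>f\<in>{1..n}. \<Sum>e\<in>{1..n}. scal (R a f b e * sgn (p c * (p e + p d))) (word [T f c, T e d]))
        - (\<Sum>r\<in>{1..n}. \<Sum>s\<in>{1..n}. scal (R s c r d * sgn (p r * (p a + p s))) (word [T b r, T a s]))
      = scal (sgn (p c * p d)) (superFRT_rel n p (Rsuper p R) a b c d)"
    unfolding superFRT_rel_def Rsuper_def scal_diff_right scal_sum_right scal_scal fmul_gn
    by (intro arg_cong2[where f="(-)"] sum.cong refl arg_cong2[where f=scal] sgn_mult3_parity[symmetric])
       (auto simp: even_add even_mult_iff)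
  have "alg_ext (phi_gen p) (FRT_rel n R a b c d)
      - fmul (scal (sgn (p c * p d)) (superFRT_rel n p (Rsuper p R) a b c d)) (word (replicate (p c + p d) G)) \<in> K"
    using alg_ext_phi_gen_quadratic[of "\<lambda>r s. R s c r d" c d "\<lambda>f e. R a f b e"] hb
    unfolding signs[symmetric] FRT_rel_def fmul_gn by auto
  moreover have "fmul (scal (sgn (p c * p d)) (superFRT_rel n p (Rsuper p R) a b c d))
      (word (replicate (p c + p d) G)) \<in> K"
    using super_rel by (intro ideal_gen_fmul_right ideal_gen_scal)
  ultimately show ?thesis by (rule ideal_gen_diff_cancel)
qed

lemma alg_ext_phi_gen_superFRT_rel:
  assumes abcd: "a \<in> {1..n}" "b \<in> {1..n}" "c \<in> {1..n}" "d \<in> {1..n}"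
    and sup: "superizable n p R"
    and rel: "FRT_rel n R a b c d \<in> K"
  shows "alg_ext (phi_gen p) (superFRT_rel n p (Rsuper p R) a b c d) \<in> K"
proof -
  have hb: "even (p r + p s) = even (p c + p d)"
    if "r \<in> {1..n}" "s \<in> {1..n}" "sgn (p c * p d + p r * p a) * Rsuper p R s c r d \<noteq> 0" for r s
    using that superizable_parity[OF sup that(2,1) abcd(3,4)] by (auto simp: Rsuper_def add.commute)
  have signs: "(\<Sum>f\<in>{1..n}. \<Sum>e\<in>{1..n}. scal (sgn (p a * p b + p c * p e) * Rsuper p R a f b e
          * sgn (p c * (p e + p d))) (word [T f c, T e d]))
        - (\<Sum>r\<in>{1..n}. \<Sum>s\<in>{1..n}. scal (sgn (p c * p d + p r * p a) * Rsuper p R s c r d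
          * sgn (p r * (p a + p s))) (word [T b r, T a s]))
      = scal (sgn (p c * p d)) (FRT_rel n R a b c d)"
    unfolding FRT_rel_def Rsuper_def scal_diff_right scal_sum_right scal_scal fmul_gn
    by (intro arg_cong2[where f="(-)"] sum.cong refl arg_cong2[where f=scal] sgn_mult3_parity')
       (auto simp: even_add even_mult_iff)
  have "alg_ext (phi_gen p) (superFRT_rel n p (Rsuper p R) a b c d)
      - fmul (scal (sgn (p c * p d)) (FRT_rel n R a b c d)) (word (replicate (p c + p d) G)) \<in> K"
    using alg_ext_phi_gen_quadratic[of "\<lambda>r s. sgn (p c * p d + p r * p a) * Rsuper p R s c r d" c d
        "\<lambda>f e. sgn (p a * p b + p c * p e) * Rsuper p R a f b e"] hb
    unfolding signs[symmetric] superFRT_rel_def fmul_gn by auto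
  moreover have "fmul (scal (sgn (p c * p d)) (FRT_rel n R a b c d)) (word (replicate (p c + p d) G)) \<in> K"
    using rel by (intro ideal_gen_fmul_right ideal_gen_scal)
  ultimately show ?thesis by (rule ideal_gen_diff_cancel)
qed

lemma alg_ext_phi_gen_Z2_rel: "r \<in> Z2_rels n p \<Longrightarrow> alg_ext (phi_gen p) r \<in> K"
proof (erule Z2_relsE)
  assume "r = word [G, G] - word []"
  then show ?thesis
    using Z2_rel_in_ideal[OF G_square_rel_in_Z2_rels] by (simp add: alg_ext_diff alg_ext_phi_gen_word)
next
  fix i j assume "\<not> (i \<in> {1..n} \<and> j \<in> {1..n})" "r = word [T i j]"
  then show ?thesis using word_T_out_of_range_in_ideal[of i j "[]"] by (simp add: alg_ext_phi_gen_word)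
next
  fix i j assume ij: "i \<in> {1..n}" "j \<in> {1..n}" "r = commute_rel p i j"
  have "alg_ext (phi_gen p) (commute_rel p i j :: 'k fa) = fmul (commute_rel p i j) (word (replicate (p j) G))"
    by (simp add: commute_rel_def alg_ext_diff alg_ext_scal alg_ext_phi_gen_word fmul_diff_left
        fmul_scal_left replicate_append_same)
  moreover have "fmul (commute_rel p i j) (word (replicate (p j) G)) \<in> K"
    using ij by (intro ideal_gen_fmul_right Z2_rel_in_ideal commute_rel_in_Z2_rels)
  ultimately show ?thesis
    using ij(3) by simp
qed

lemma phi_word_phi_word_congruent: "word (A @ phi_word p (phi_word p w)) - word (A @ w) \<in> K"
proof (induction w arbitrary: A)
  case Nil then show ?case by (simp add: ideal_gen.zero)
next
  case (Cons x w)
  show ?case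
  proof (cases x)
    case G
    then show ?thesis using Cons[of "A @ [G]"] by simp
  next
    case (T i j)
    have "word ((A @ [T i j]) @ replicate (p j + p j) G @ phi_word p (phi_word p w))
        - word ((A @ [T i j]) @ replicate 0 G @ phi_word p (phi_word p w)) \<in> K"
      by (rule G_power_parity) simp
    from ideal_gen.add[OF this Cons[of "A @ [T i j]"]] show ?thesis
      by (simp add: T replicate_add)
  qed
qed

lemma alg_ext_phi_gen_involutive: "alg_ext (phi_gen p) (alg_ext (phi_gen p) x) - x \<in> K"
proof -
  have "alg_ext (phi_gen p) (alg_ext (phi_gen p) x) - x
      = lin_ext (\<lambda>w. word (phi_word p (phi_word p w))) x - lin_ext (\<lambda>w. Poly_Mapping.single w 1) x"
    by (simp add: alg_ext_phi_gen_as_lin_ext lin_ext_compose word_as_single lin_ext_id)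
  also have "\<dots> = lin_ext (\<lambda>w. word (phi_word p (phi_word p w)) - word w) x"
    by (simp add: lin_ext_diff_fun word_as_single)
  also have "\<dots> \<in> K"
    using phi_word_phi_word_congruent[of "[]"] by (intro ideal_gen_lin_ext) simp
  finally show ?thesis .
qed

end

text \<open>The image under \<open>\<phi> \<otimes> \<phi>\<close> of the superized basis tensor \<open>u g\<^sup>d\<^sup>e\<^sup>g \<^sup>v \<otimes> v\<close>.\<close>

definition phi_superize :: "(nat \<Rightarrow> nat) \<Rightarrow> gen list \<times> gen list \<Rightarrow> 'k::field fa2" where
  "phi_superize p k = Poly_Mapping.single
     (phi_word p (fst k) @ replicate (deg_word p (snd k)) G, phi_word p (snd k)) 1"

lemma tens_map_as_lin_ext: "tens_map f = lin_ext (\<lambda>k. tens (f (word (fst k))) (f (word (snd k))))"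
  by (rule ext) (simp add: tens_map_def lin_ext_def case_prod_beta)

lemma superize_map_as_lin_ext:
  "superize_map p = lin_ext (\<lambda>k. Poly_Mapping.single (fst k @ replicate (deg_word p (snd k)) G, snd k) 1)"
  by (rule ext) (simp add: superize_map_def lin_ext_def case_prod_beta)

lemma tens_map_phi_cop_superized:
  "tens_map (alg_ext (phi_gen p)) (cop_superized n p x) = lin_ext (phi_superize p) (cop n x)"
  unfolding cop_superized_def tens_map_as_lin_ext superize_map_as_lin_ext lin_ext_compose
  by (rule lin_ext_cong) (simp add: alg_ext_phi_gen_word tens_word phi_superize_def word_as_single[symmetric])

lemma scop_word_Cons: "scop n q (word (x # w)) = stmul q (cop_gen n x) (scop n q (word w))"
  by (simp add: scop_word)

lemma scop_replicate_G:
  "scop n q (word (replicate m G)) = Poly_Mapping.single (replicate m G, replicate m G) 1"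
  by (induction m) (simp_all add: scop_word tens_one_def cop_gen_G stmul_single)

context Z2_ideal
begin

lemma phi_superize_pair_append:
  "phi_superize p (pair_append k1 k2) - stmul p (phi_superize p k1) (phi_superize p k2) \<in> tens_ideal K"
proof -
  obtain u1 v1 u2 v2 where k: "k1 = (u1, v1)" "k2 = (u2, v2)" by (cases k1, cases k2)
  let ?P1 = "phi_word p u1" and ?P2 = "phi_word p u2"
  let ?d1 = "deg_word p v1" and ?d2 = "deg_word p v2" and ?d12 = "deg_word p (v1 @ v2)"
  let ?\<sigma> = "sgn (?d1 * deg_word p u2) :: 'k"
  let ?W12 = "word (?P1 @ ?P2 @ replicate ?d12 G) :: 'k fa"
  let ?Ws = "word (?P1 @ ?P2 @ replicate (?d2 + ?d1) G) :: 'k fa"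
  let ?L = "word (?P1 @ replicate ?d1 G @ ?P2 @ replicate ?d2 G) :: 'k fa"
  have dP2: "deg_word p (?P2 @ replicate ?d2 G) = deg_word p u2"
    by (simp add: deg_word_append deg_word_less_2)
  have L: "?L - scal ?\<sigma> ?Ws \<in> K"
    using G_power_commute_word[of ?P1 ?d1 "?P2 @ replicate ?d2 G"] by (simp add: dP2 replicate_add)
  have W: "?W12 - ?Ws \<in> K"
    using G_power_parity[of ?d12 "?d2 + ?d1" "?P1 @ ?P2" "[]"] by (simp add: deg_word_append) blast
  have eq: "?W12 - scal ?\<sigma> ?L = (?W12 - ?Ws) - scal ?\<sigma> (?L - scal ?\<sigma> ?Ws)"
    by (simp add: scal_diff_right sgn_mult_self)
  have "?W12 - scal ?\<sigma> ?L \<in> K"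
    unfolding eq by (rule ideal_gen_diff[OF W ideal_gen_scal[OF L]])
  moreover have "phi_superize p (pair_append k1 k2) - stmul p (phi_superize p k1) (phi_superize p k2)
      = tens (?W12 - scal ?\<sigma> ?L) (word (phi_word p v1 @ phi_word p v2))"
    by (simp add: k phi_superize_def pair_append_def stmul_single tens_diff_left tens_scal_left
        tens_word dP2 deg_word_append deg_word_less_2)
  ultimately show ?thesis by (simp add: tens_ideal.left)
qed

lemma lin_ext_phi_superize_mult:
  "lin_ext (phi_superize p) (stmul (\<lambda>_. 0) X Y)
   - stmul p (lin_ext (phi_superize p) X) (lin_ext (phi_superize p) Y) \<in> tens_ideal K"
proof -
  let ?S = "phi_superize p" and ?X = "Poly_Mapping.lookup X" and ?Y = "Poly_Mapping.lookup Y"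
  have "lin_ext ?S (stmul (\<lambda>_. 0) X Y) = (\<Sum>a\<in>Poly_Mapping.keys X. \<Sum>b\<in>Poly_Mapping.keys Y.
      scal (?X a * ?Y b) (?S (pair_append a b)))"
    by (simp add: stmul_as_bilin_ext bilin_ext_keys lin_ext_sum koszul_sign_def mult.commute)
  moreover have "stmul p (lin_ext ?S X) (lin_ext ?S Y) = (\<Sum>a\<in>Poly_Mapping.keys X. \<Sum>b\<in>Poly_Mapping.keys Y.
      scal (?X a * ?Y b) (stmul p (?S a) (?S b)))"
    by (simp add: stmul_as_bilin_ext bilin_ext_lin_ext)
  ultimately have "lin_ext ?S (stmul (\<lambda>_. 0) X Y) - stmul p (lin_ext ?S X) (lin_ext ?S Y)
    = (\<Sum>a\<in>Poly_Mapping.keys X. \<Sum>b\<in>Poly_Mapping.keys Y.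
        scal (?X a * ?Y b) (?S (pair_append a b) - stmul p (?S a) (?S b)))"
    by (simp add: scal_diff_right sum_subtractf)
  then show ?thesis
    by (simp add: tens_ideal_sum tens_ideal_scal phi_superize_pair_append)
qed

lemma phi_superize_cop_gen:
  "lin_ext (phi_superize p) (cop_gen n x) - scop n p (alg_ext (phi_gen p) (word [x])) \<in> tens_ideal K"
proof (cases x)
  case G
  then show ?thesis
    by (simp add: cop_gen_G alg_ext_phi_gen_word scop_word phi_superize_def tens_ideal.zero)
next
  case (T i j)
  show ?thesis
  proof (cases "i \<in> {1..n} \<and> j \<in> {1..n}")
    case False
    then show ?thesis
      by (simp add: T cop_gen_T_out_of_range alg_ext_phi_gen_word scop_word_Cons tens_ideal.zero)
  next
    case True
    let ?A = "\<lambda>k. T i k # replicate (p k) G @ replicate (deg_word p [T k j]) G"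
    let ?A' = "\<lambda>k. T i k # replicate (p j) G"
    let ?B = "\<lambda>k. T k j # replicate (p j) G"
    have "lin_ext (phi_superize p) (cop_gen n x) - scop n p (alg_ext (phi_gen p) (word [x]))
       = (\<Sum>k\<in>{1..n}. tens (word (?A k) - word (?A' k)) (word (?B k)))"
      using True
      by (simp add: T cop_gen_T alg_ext_phi_gen_word scop_word_Cons scop_replicate_G lin_ext_sum
          phi_superize_def stmul_sum_left stmul_single tens_diff_left tens_word sum_subtractf)
    also have "\<dots> \<in> tens_ideal K"
    proof (intro tens_ideal_sum tens_ideal.left)
      fix k
      have "word ([T i k] @ replicate (p k + deg_word p [T k j]) G @ [])
          - word ([T i k] @ replicate (p j) G @ []) \<in> K"
        by (rule G_power_parity) (simp add: deg_word_T even_add, presburger)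
      then show "word (?A k) - word (?A' k) \<in> K" by (simp add: replicate_add)
    qed
    finally show ?thesis .
  qed
qed

lemma phi_superize_cop_word:
  assumes twist: "twist_closed p K"
  shows "lin_ext (phi_superize p) (cop n (word w)) - scop n p (alg_ext (phi_gen p) (word w)) \<in> tens_ideal K"
proof (induction w)
  case Nil
  then show ?case
    by (simp add: cop_eq_scop_trivial_grading scop_word alg_ext_phi_gen_word tens_one_def
        phi_superize_def tens_ideal.zero)
next
  case (Cons x w)
  let ?X = "cop n (word [x])" and ?Y = "cop n (word w)"
  let ?U = "scop n p (alg_ext (phi_gen p) (word [x]))" and ?V = "scop n p (alg_ext (phi_gen p) (word w))"
  have w: "word (x # w) = fmul (word [x]) (word w)" by simp
  have split: "lin_ext (phi_superize p) (cop n (word (x # w))) - scop n p (alg_ext (phi_gen p) (word (x # w)))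
    = (lin_ext (phi_superize p) (stmul (\<lambda>_. 0) ?X ?Y)
        - stmul p (lin_ext (phi_superize p) ?X) (lin_ext (phi_superize p) ?Y))
      + stmul p (lin_ext (phi_superize p) ?X - ?U) (lin_ext (phi_superize p) ?Y)
      + stmul p ?U (lin_ext (phi_superize p) ?Y - ?V)"
    unfolding w
    by (simp add: alg_ext_fmul scop_fmul cop_eq_scop_trivial_grading stmul_diff_left stmul_diff_right
        del: fmul_word)
  have "lin_ext (phi_superize p) ?X - ?U \<in> tens_ideal K"
    using phi_superize_cop_gen by (simp add: cop_eq_scop_trivial_grading scop_word)
  then show ?case
    unfolding split
    by (intro tens_ideal.add lin_ext_phi_superize_mult tens_ideal_stmul_left[OF _ twist]
        tens_ideal_stmul_right[OF Cons twist])
qed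

lemma phi_cop_compat:
  assumes "twist_closed p K"
  shows "tens_map (alg_ext (phi_gen p)) (cop_superized n p x) - scop n p (alg_ext (phi_gen p) x)
    \<in> tens_ideal K"
proof -
  have "lin_ext (phi_superize p) (cop n x) - scop n p (alg_ext (phi_gen p) x)
    = lin_ext (\<lambda>w. lin_ext (phi_superize p) (cop n (word w)) - scop n p (alg_ext (phi_gen p) (word w))) x"
    by (simp add: cop_eq_scop_trivial_grading scop_as_lin_ext alg_ext_as_lin_ext lin_ext_compose
        lin_ext_diff_fun word_as_single)
  then show ?thesis
    by (simp add: tens_map_phi_cop_superized tens_ideal_lin_ext phi_superize_cop_word[OF assms])
qed

end

lemma alg_ext_phi_gen_AR_Z2_ideal:
  assumes sup: "superizable n p R" and x: "x \<in> ideal_gen (AR_Z2_rels n p R)"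
  shows "alg_ext (phi_gen p) x \<in> ideal_gen (superAR_Z2_rels n p (Rsuper p R))"
proof (rule alg_ext_ideal_gen[OF _ x])
  interpret Z2_ideal n p "superAR_Z2_rels n p (Rsuper p R)"
    by (simp add: superAR_Z2_rels_eq_FRT_Z2_rels Z2_ideal_FRT_Z2_rels)
  fix r assume "r \<in> AR_Z2_rels n p R"
  then show "alg_ext (phi_gen p) r \<in> K"
    unfolding AR_Z2_rels_eq_FRT_Z2_rels
  proof (cases rule: FRT_Z2_relsE)
    case (1 a b c d)
    have "superFRT_rel n p (Rsuper p R) a b c d \<in> K"
      using 1 by (intro ideal_gen_generator) (auto simp: superAR_Z2_rels_def)
    then show ?thesis
      using alg_ext_phi_gen_FRT_rel[OF 1(1-4) sup] 1(5) by (simp add: superFRT_rel_trivial_grading)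
  qed (rule alg_ext_phi_gen_Z2_rel)
qed

lemma alg_ext_phi_gen_superAR_Z2_ideal:
  assumes sup: "superizable n p R" and x: "x \<in> ideal_gen (superAR_Z2_rels n p (Rsuper p R))"
  shows "alg_ext (phi_gen p) x \<in> ideal_gen (AR_Z2_rels n p R)"
proof (rule alg_ext_ideal_gen[OF _ x])
  interpret Z2_ideal n p "AR_Z2_rels n p R"
    by (simp add: AR_Z2_rels_eq_FRT_Z2_rels Z2_ideal_FRT_Z2_rels)
  fix r assume "r \<in> superAR_Z2_rels n p (Rsuper p R)"
  then show "alg_ext (phi_gen p) r \<in> K"
    unfolding superAR_Z2_rels_eq_FRT_Z2_rels
  proof (cases rule: FRT_Z2_relsE)
    case (1 a b c d)
    have "FRT_rel n R a b c d \<in> K"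
      using 1 by (intro ideal_gen_generator) (auto simp: AR_Z2_rels_def)
    then show ?thesis
      using alg_ext_phi_gen_superFRT_rel[OF 1(1-4) sup] 1(5) by simp
  qed (rule alg_ext_phi_gen_Z2_rel)
qed

lemma phi_gen_super_bialg_iso:
  assumes sup: "superizable n p R"
  shows "super_bialg_iso n p (ideal_gen (AR_Z2_rels n p R))
      (ideal_gen (superAR_Z2_rels n p (Rsuper p R))) (phi_gen p)"
proof -
  interpret I: Z2_ideal n p "AR_Z2_rels n p R"
    by (simp add: AR_Z2_rels_eq_FRT_Z2_rels Z2_ideal_FRT_Z2_rels)
  interpret J: Z2_ideal n p "superAR_Z2_rels n p (Rsuper p R)"
    by (simp add: superAR_Z2_rels_eq_FRT_Z2_rels Z2_ideal_FRT_Z2_rels)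
  show ?thesis
    unfolding super_bialg_iso_def Let_def
  proof (intro conjI ballI allI exI[where x="phi_gen p"])
    show "\<exists>v. homogeneous p (deg_word p w) v \<and> alg_ext (phi_gen p) (word w) - v \<in> J.K" for w
      by (intro exI[of _ "word (phi_word p w)"])
         (simp add: alg_ext_phi_gen_word homogeneous_word ideal_gen.zero)
  qed (simp_all add: sup alg_ext_phi_gen_AR_Z2_ideal alg_ext_phi_gen_superAR_Z2_ideal
      I.alg_ext_phi_gen_involutive J.alg_ext_phi_gen_involutive
      J.phi_cop_compat twist_closed_superAR_Z2 counit_alg_ext_phi_gen)
qed

theorem mainTheorem6:
  fixes n :: nat and p :: "nat \<Rightarrow> nat" and R :: "nat \<Rightarrow> nat \<Rightarrow> nat \<Rightarrow> nat \<Rightarrow> 'k::field"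
  assumes p01: "\<forall>i\<in>{1..n}. p i \<in> {0, 1}"
    and qybe: "QYBE n R"
    and sup: "superizable n p R"
  shows "is_bialgebra_presented n (ideal_gen (AR_Z2_rels n p R))
       \<and> is_super_bialgebra_presented n p (ideal_gen (superAR_Z2_rels n p (Rsuper p R)))
       \<and> (\<exists>phi0. super_bialg_iso n p (ideal_gen (AR_Z2_rels n p R))
                   (ideal_gen (superAR_Z2_rels n p (Rsuper p R))) phi0)"
  using AR_Z2_bialgebra superAR_Z2_super_bialgebra[OF sup] phi_gen_super_bialg_iso[OF sup] by blast

end
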